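(* Let $\Gamma$ be an infinite connected subgraph of $\mathbb B$ with natural weights, $x_0\in\Gamma$, $r\ge1$, $B=B(x_0,r)$ and $M=M(x_0,r)$. Then (a) $E^z\tau_B\le2rV(x_0,r)$ for all $z\in B(x_0,r)$; (b) $E^x\tau_B\ge\dfrac{rV(x_0,r/(32M))}{32M}$ for all $x\in B(x_0,r/(32M))$.
   Context: $\mathbb B$ is the rooted tree in which every vertex has $n_0\ge2$ children. On $\Gamma$: $\mu_{xy}=1$ for adjacent $x,y$ and $0$ otherwise, $\mu_x$ is the degree of $x$ in $\Gamma$, $\mu(A)=\sum_{x\in A}\mu_x$, $d$ the graph distance in $\Gamma$, $B(x,r)=\{y\in\Gamma:d(x,y)\le r\}$, $V(x,r)=\mu(B(x,r))$. $Y$ is the continuous-time simple random walk on $\Gamma$ (exponential mean-1 holding times, jumps to a uniform neighbour), $P^x,E^x$ its law and expectation started at $x$, and $\tau_B=\inf\{t\ge0:Y_t\notin B\}$. $M(x,r)$ is the smallest $m$ such that there is $A=\{z_1,\dots,z_m\}\subset\Gamma$ with $d(x,z_i)\in[r/4,3r/4]$ for all $i$ such that every path in $\Gamma$ from $x$ to $\Gamma\setminus B(x,r)$ passes through $A$. *)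

theory Defs
  imports "HOL-Probability.Probability"
begin

text \<open>The rooted tree B in which every vertex has n0 children: vertices are the finite
  lists of natural numbers with all entries < n0 (the root is the empty list, the children
  of v are v @ [i] for i < n0).  A subgraph Gamma is given by its vertex set G; since a
  connected subgraph of a tree is the induced subgraph on its vertex set, the edges of
  Gamma are the tree edges between vertices of G.\<close>

definition tree_vertex :: "nat \<Rightarrow> nat list \<Rightarrow> bool" where
  "tree_vertex n0 v \<longleftrightarrow> (\<forall>i\<in>set v. i < n0)"

definition tadj :: "nat list \<Rightarrow> nat list \<Rightarrow> bool" where
  "tadj v w \<longleftrightarrow> (\<exists>i. w = v @ [i]) \<or> (\<exists>i. v = w @ [i])"

definition gwalk :: "nat list set \<Rightarrow> nat list list \<Rightarrow> bool" where
  "gwalk G p \<longleftrightarrow> p \<noteq> [] \<and> set p \<subseteq> G \<and> (\<forall>i. Suc i < length p \<longrightarrow> tadj (p ! i) (p ! Suc i))"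

definition connected_sub :: "nat list set \<Rightarrow> bool" where
  "connected_sub G \<longleftrightarrow> (\<forall>x\<in>G. \<forall>y\<in>G. \<exists>p. gwalk G p \<and> hd p = x \<and> last p = y)"

definition gdist :: "nat list set \<Rightarrow> nat list \<Rightarrow> nat list \<Rightarrow> nat" where
  "gdist G x y = (LEAST n. \<exists>p. gwalk G p \<and> hd p = x \<and> last p = y \<and> length p = Suc n)"

definition gdeg :: "nat list set \<Rightarrow> nat list \<Rightarrow> nat" where
  "gdeg G x = card {y\<in>G. tadj x y}"

definition gball :: "nat list set \<Rightarrow> nat list \<Rightarrow> real \<Rightarrow> nat list set" where
  "gball G x r = {y\<in>G. real (gdist G x y) \<le> r}"

definition gvol :: "nat list set \<Rightarrow> nat list \<Rightarrow> real \<Rightarrow> real" where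
  "gvol G x r = (\<Sum>y\<in>gball G x r. real (gdeg G y))"

text \<open>M(x,r), valued in extended naturals (infinite if no separating set exists).\<close>
definition Msep :: "nat list set \<Rightarrow> nat list \<Rightarrow> real \<Rightarrow> enat" where
  "Msep G x r = Inf {enat (card A) | A. finite A \<and> A \<subseteq> G \<and>
      (\<forall>z\<in>A. r / 4 \<le> real (gdist G x z) \<and> real (gdist G x z) \<le> 3 * r / 4) \<and>
      (\<forall>p. gwalk G p \<and> hd p = x \<and> last p \<notin> gball G x r \<longrightarrow> set p \<inter> A \<noteq> {})}"

definition nbr_list :: "nat \<Rightarrow> nat list set \<Rightarrow> nat list \<Rightarrow> nat list list" where
  "nbr_list n0 G v = (if v \<noteq> [] \<and> butlast v \<in> G then [butlast v] else [])
      @ filter (\<lambda>w. w \<in> G) (map (\<lambda>i. v @ [i]) [0..<n0])"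

definition jump :: "nat \<Rightarrow> nat list set \<Rightarrow> nat list \<Rightarrow> real \<Rightarrow> nat list" where
  "jump n0 G v u = (let l = nbr_list n0 G v in
     if l = [] then v else l ! min (length l - 1) (nat \<lfloor>u * real (length l)\<rfloor>))"

text \<open>Driving randomness: i.i.d. pairs (U_n, H_n), U_n uniform on [0,1], H_n exponential
  of mean 1.  The jump chain is X_0 = z, X_(n+1) = jump(X_n, U_n); the continuous-time walk
  is Y_t = X_n for S_n \<le> t < S_(n+1), S_n = H_0 + ... + H_(n-1).\<close>
definition walk_space :: "(nat \<Rightarrow> real \<times> real) measure" where
  "walk_space = PiM UNIV (\<lambda>_. uniform_measure lborel {0..1} \<Otimes>\<^sub>M density lborel (exponential_density 1))"

fun jchain :: "nat \<Rightarrow> nat list set \<Rightarrow> nat list \<Rightarrow> (nat \<Rightarrow> real \<times> real) \<Rightarrow> nat \<Rightarrow> nat list" where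
  "jchain n0 G z \<omega> 0 = z"
| "jchain n0 G z \<omega> (Suc n) = jump n0 G (jchain n0 G z \<omega> n) (fst (\<omega> n))"

text \<open>Exit time tau_B = inf{t. Y_t \<notin> B} = S_N, N the first index with X_N \<notin> B.\<close>
definition exit_time :: "nat \<Rightarrow> nat list set \<Rightarrow> nat list set \<Rightarrow> nat list \<Rightarrow> (nat \<Rightarrow> real \<times> real) \<Rightarrow> ennreal" where
  "exit_time n0 G B z \<omega> = (if \<exists>n. jchain n0 G z \<omega> n \<notin> B
     then (\<Sum>k < (LEAST n. jchain n0 G z \<omega> n \<notin> B). ennreal (snd (\<omega> k)))
     else \<infinity>)"

definition exp_exit :: "nat \<Rightarrow> nat list set \<Rightarrow> nat list set \<Rightarrow> nat list \<Rightarrow> ennreal" where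
  "exp_exit n0 G B z = (\<integral>\<^sup>+ \<omega>. exit_time n0 G B z \<omega> \<partial>walk_space)"

end

theory Submission
  imports Defs "HOL-Library.Sublist"
begin

(*
  The mean exit time u(x) = E^x tau_B is the least nonnegative solution of u = 1 + P u on B,
  u = 0 off B, where P averages over neighbours: truncating tau_B at the k-th jump gives
  iterates increasing to u, and if they stay bounded the walk leaves B almost surely.  Hence
  nonnegative supersolutions bound u from above, and bounded subsolutions that are nonpositive
  off B bound it from below.

  On a tree the Gromov product (y|z)_e is harmonic in y except for a unit source at e and a
  unit sink at z.  For (a), sum_{z in B} mu_z (y|z)_e with e outside B is a supersolution;
  choosing e at distance floor r + 1 from x0 bounds it by 2 r V(x0, r).  For (b), average
  (y|z)_a over a separating set A of size M and subtract a constant: the result is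
  subharmonic away from z, nonpositive outside B because a geodesic from z leaving B passes
  through A, and at least r/(32M) on the small ball; summing over z in the small ball against
  mu_z gives the subsolution.
*)

section \<open>The random walk\<close>

definition step_measure :: "(real \<times> real) measure" where
  "step_measure = uniform_measure lborel {0..1} \<Otimes>\<^sub>M density lborel (exponential_density 1)"

lemma sets_step_measure: "sets step_measure = sets (borel \<Otimes>\<^sub>M borel)"
  unfolding step_measure_def by (intro sets_pair_measure_cong) auto

lemma measurable_fst_step_measure [measurable]: "fst \<in> borel_measurable step_measure"
  by (simp add: measurable_cong_sets[OF sets_step_measure refl])

lemma measurable_snd_step_measure [measurable]: "snd \<in> borel_measurable step_measure"
  by (simp add: measurable_cong_sets[OF sets_step_measure refl])

lemma prob_space_unit_uniform: "prob_space (uniform_measure lborel {0..1::real})"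
  by (rule prob_space_uniform_measure) auto

lemma prob_space_unit_exponential: "prob_space (density lborel (exponential_density 1))"
  by (rule prob_space_exponential_density) simp

lemma prob_space_step_measure: "prob_space step_measure"
proof -
  interpret U: prob_space "uniform_measure lborel {0..1::real}"
    by (rule prob_space_unit_uniform)
  interpret E: prob_space "density lborel (exponential_density 1)"
    by (rule prob_space_unit_exponential)
  interpret pair_prob_space "uniform_measure lborel {0..1::real}" "density lborel (exponential_density 1)" ..
  show ?thesis
    unfolding step_measure_def by (rule P.prob_space_axioms)
qed

lemma nn_integral_step_measure:
  assumes [measurable]: "f \<in> borel_measurable (borel \<Otimes>\<^sub>M borel)"
  shows "(\<integral>\<^sup>+x. f x \<partial>step_measure) =
    (\<integral>\<^sup>+u. \<integral>\<^sup>+t. f (u, t) \<partial>density lborel (exponential_density 1) \<partial>uniform_measure lborel {0..1})"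
proof -
  interpret E: prob_space "density lborel (exponential_density 1)"
    by (rule prob_space_unit_exponential)
  show ?thesis
    unfolding step_measure_def by (rule E.nn_integral_fst[symmetric]) measurable
qed

lemma nn_integral_step_measure_fst:
  assumes [measurable]: "g \<in> borel_measurable borel"
  shows "(\<integral>\<^sup>+x. g (fst x) \<partial>step_measure) = (\<integral>\<^sup>+u. g u \<partial>uniform_measure lborel {0..1})"
proof -
  interpret E: prob_space "density lborel (exponential_density 1)"
    by (rule prob_space_unit_exponential)
  show ?thesis
    using E.emeasure_space_1 by (simp add: nn_integral_step_measure)
qed

lemma nn_integral_exponential_mean: "(\<integral>\<^sup>+t. ennreal t \<partial>density lborel (exponential_density 1)) = 1"
proof -
  have "(\<integral>\<^sup>+t. ennreal t \<partial>density lborel (exponential_density 1)) =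
      (\<integral>\<^sup>+t. ennreal (t ^ 1 * exp (- t)) * indicator {0..} t \<partial>lborel)"
    by (subst nn_integral_density)
      (auto intro!: nn_integral_cong simp: exponential_density_def indicator_def
        ennreal_mult'[symmetric] mult.commute)
  also have "\<dots> = 1"
    by (subst nn_intergal_power_times_exp_Ici) simp
  finally show ?thesis .
qed

lemma nn_integral_step_measure_snd: "(\<integral>\<^sup>+x. ennreal (snd x) \<partial>step_measure) = 1"
proof -
  interpret U: prob_space "uniform_measure lborel {0..1::real}"
    by (rule prob_space_unit_uniform)
  show ?thesis
    by (simp add: nn_integral_step_measure nn_integral_exponential_mean U.emeasure_space_1)
qed

lemma walk_space_eq_PiM: "walk_space = PiM UNIV (\<lambda>_. step_measure)"
  unfolding walk_space_def step_measure_def ..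

lemma prob_space_walk_space: "prob_space walk_space"
proof -
  interpret step_measure: prob_space step_measure
    by (rule prob_space_step_measure)
  interpret S: sequence_space step_measure ..
  show ?thesis
    unfolding walk_space_eq_PiM by (rule S.P.prob_space_axioms)
qed

lemma measurable_walk_space_component [measurable]: "(\<lambda>\<omega>. \<omega> j) \<in> measurable walk_space step_measure"
  unfolding walk_space_eq_PiM by measurable

lemma nn_integral_walk_space_first_step:
  assumes f [measurable]: "f \<in> borel_measurable walk_space"
  shows "(\<integral>\<^sup>+\<omega>. f \<omega> \<partial>walk_space) = (\<integral>\<^sup>+x. \<integral>\<^sup>+\<omega>. f (case_nat x \<omega>) \<partial>walk_space \<partial>step_measure)"
proof -
  interpret step_measure: prob_space step_measure
    by (rule prob_space_step_measure)
  interpret S: sequence_space step_measure ..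
  have f': "f \<in> borel_measurable S.S"
    using f by (simp add: walk_space_eq_PiM)
  have "(\<integral>\<^sup>+\<omega>. f \<omega> \<partial>walk_space) = (\<integral>\<^sup>+X. f ((\<lambda>(s, \<omega>). case_nat s \<omega>) X) \<partial>(step_measure \<Otimes>\<^sub>M S.S))"
    unfolding walk_space_eq_PiM by (subst S.PiM_iter[symmetric]) (simp add: nn_integral_distr f')
  also have "\<dots> = (\<integral>\<^sup>+x. \<integral>\<^sup>+\<omega>. f ((\<lambda>(s, \<omega>). case_nat s \<omega>) (x, \<omega>)) \<partial>S.S \<partial>step_measure)"
    using f' by (subst S.nn_integral_fst) simp_all
  finally show ?thesis
    by (simp add: walk_space_eq_PiM)
qed

lemma measurable_jump [measurable]: "jump n0 G v \<in> measurable borel (count_space UNIV)"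
  unfolding jump_def Let_def by measurable

lemma measurable_jchain [measurable]:
  "(\<lambda>\<omega>. jchain n0 G z \<omega> n) \<in> measurable walk_space (count_space UNIV)"
proof (induction n)
  case (Suc n)
  have "(\<lambda>\<omega>. jump n0 G v (fst (\<omega> n))) \<in> measurable walk_space (count_space UNIV)" for v
    unfolding walk_space_def by measurable
  from measurable_compose_countable[OF this Suc.IH] show ?case
    by simp
qed simp

lemma jchain_Suc_shift:
  "jchain n0 G z \<omega> (Suc n) = jchain n0 G (jump n0 G z (fst (\<omega> 0))) (\<lambda>n. \<omega> (Suc n)) n"
  by (induction n) auto

lemma mem_unit_subinterval_iff:
  fixes u :: real
  assumes "0 \<le> u" "u < 1" "i < n"
  shows "u \<in> {real i / n..<(real i + 1) / n} \<longleftrightarrow> i = nat \<lfloor>u * n\<rfloor>"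
proof -
  have "u \<in> {real i / n..<(real i + 1) / n} \<longleftrightarrow> real i \<le> u * n \<and> u * n < real i + 1"
    using assms by (simp add: field_simps)
  also have "\<dots> \<longleftrightarrow> \<lfloor>u * n\<rfloor> = int i"
    by (simp add: floor_eq_iff)
  finally show ?thesis
    using assms by auto
qed

lemma jump_eq_sum_indicator:
  fixes n0 :: nat and G :: "nat list set" and z :: "nat list" and u :: real
    and h :: "nat list \<Rightarrow> ennreal"
  defines "l \<equiv> nbr_list n0 G z"
  defines "n \<equiv> length l"
  assumes "l \<noteq> []" and "u \<noteq> 1"
  shows "h (jump n0 G z u) * indicator {0..1} u =
    (\<Sum>i<n. h (l ! i) * indicator {real i / n..<(real i + 1) / n} u)"
proof (cases "0 \<le> u \<and> u < 1")
  case True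
  define k where "k = nat \<lfloor>u * n\<rfloor>"
  have "n > 0"
    using assms(3) by (simp add: n_def)
  then have "u * n < n"
    using True by simp
  then have k: "k < n"
    unfolding k_def using True by (simp add: nat_less_iff floor_less_iff)
  have "jump n0 G z u = l ! k"
    using assms(3) k unfolding jump_def Let_def l_def[symmetric] n_def[symmetric] k_def[symmetric]
    by simp
  moreover have "(\<Sum>i<n. h (l ! i) * indicator {real i / n..<(real i + 1) / n} u) =
      (\<Sum>i<n. if i = k then h (l ! i) else 0)"
    using mem_unit_subinterval_iff[of u _ n] True unfolding k_def[symmetric]
    by (intro sum.cong refl) (simp add: indicator_def)
  ultimately show ?thesis
    using True k by (simp add: indicator_def)
next
  case False
  have "u \<notin> {real i / n..<(real i + 1) / n}" if "i < n" for i
  proof -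
    have "(real i + 1) / n \<le> 1" "0 \<le> real i / n"
      using \<open>i < n\<close> by (simp_all add: field_simps)
    then show ?thesis
      using False \<open>u \<noteq> 1\<close> by (simp only: atLeastLessThan_iff) linarith
  qed
  then have "(\<Sum>i<n. h (l ! i) * indicator {real i / n..<(real i + 1) / n} u) = 0"
    by (intro sum.neutral) simp
  moreover have "u \<notin> {0..1}"
    using False \<open>u \<noteq> 1\<close> by auto
  ultimately show ?thesis
    by simp
qed

lemma nn_integral_jump:
  assumes "nbr_list n0 G z \<noteq> []"
  shows "(\<integral>\<^sup>+u. h (jump n0 G z u) \<partial>uniform_measure lborel {0..1::real}) =
    (\<Sum>i<length (nbr_list n0 G z). h (nbr_list n0 G z ! i)) * ennreal (1 / length (nbr_list n0 G z))"
proof -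
  define l where "l = nbr_list n0 G z"
  define n where "n = length l"
  have "(\<integral>\<^sup>+u. h (jump n0 G z u) \<partial>uniform_measure lborel {0..1::real}) =
      (\<integral>\<^sup>+u. h (jump n0 G z u) * indicator {0..1} u \<partial>lborel)"
    by (subst nn_integral_uniform_measure) (auto simp: divide_ennreal_def)
  also have "\<dots> = (\<integral>\<^sup>+u. (\<Sum>i<n. h (l ! i) * indicator {real i / n..<(real i + 1) / n} u) \<partial>lborel)"
    using AE_lborel_singleton[of 1]
  proof (rule nn_integral_cong_AE[OF eventually_mono])
    fix u :: real
    assume "u \<noteq> 1"
    with assms show "h (jump n0 G z u) * indicator {0..1} u =
        (\<Sum>i<n. h (l ! i) * indicator {real i / n..<(real i + 1) / n} u)"
      unfolding l_def n_def by (rule jump_eq_sum_indicator)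
  qed
  also have "\<dots> = (\<Sum>i<n. \<integral>\<^sup>+u. h (l ! i) * indicator {real i / n..<(real i + 1) / n} u \<partial>lborel)"
    by (rule nn_integral_sum) simp
  also have "\<dots> = (\<Sum>i<n. h (l ! i) * ennreal (1 / n))"
  proof (intro sum.cong refl)
    fix i
    have "(real i + 1) / n - real i / n = 1 / n"
      by (simp add: add_divide_distrib)
    moreover have "real i / n \<le> (real i + 1) / n"
      by (simp add: divide_right_mono)
    ultimately show "(\<integral>\<^sup>+u. h (l ! i) * indicator {real i / n..<(real i + 1) / n} u \<partial>lborel) =
        h (l ! i) * ennreal (1 / n)"
      by (subst nn_integral_cmult_indicator) auto
  qed
  also have "\<dots> = (\<Sum>i<n. h (l ! i)) * ennreal (1 / n)"
    by (simp add: sum_distrib_right)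
  finally show ?thesis
    unfolding l_def n_def .
qed

definition trunc_exit_time ::
    "nat \<Rightarrow> nat list set \<Rightarrow> nat list set \<Rightarrow> nat \<Rightarrow> nat list \<Rightarrow> (nat \<Rightarrow> real \<times> real) \<Rightarrow> ennreal" where
  "trunc_exit_time n0 G B k z \<omega> =
    (\<Sum>j<k. if \<forall>i\<le>j. jchain n0 G z \<omega> i \<in> B then ennreal (snd (\<omega> j)) else 0)"

definition stays_in ::
    "nat \<Rightarrow> nat list set \<Rightarrow> nat list set \<Rightarrow> nat \<Rightarrow> nat list \<Rightarrow> (nat \<Rightarrow> real \<times> real) \<Rightarrow> ennreal" where
  "stays_in n0 G B k z \<omega> = (if \<forall>i<k. jchain n0 G z \<omega> i \<in> B then 1 else 0)"

lemma measurable_trunc_exit_time [measurable]: "trunc_exit_time n0 G B k z \<in> borel_measurable walk_space"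
  unfolding trunc_exit_time_def[abs_def] by measurable

lemma measurable_stays_in [measurable]: "stays_in n0 G B k z \<in> borel_measurable walk_space"
  unfolding stays_in_def[abs_def] by measurable

lemma trunc_exit_time_Suc:
  "trunc_exit_time n0 G B (Suc k) z \<omega> = (if z \<in> B then
     ennreal (snd (\<omega> 0)) + trunc_exit_time n0 G B k (jump n0 G z (fst (\<omega> 0))) (\<lambda>n. \<omega> (Suc n))
   else 0)"
  unfolding trunc_exit_time_def sum.lessThan_Suc_shift less_Suc_eq_le[symmetric] All_less_Suc2
    jchain_Suc_shift[symmetric]
  by auto

lemma stays_in_Suc:
  "stays_in n0 G B (Suc k) z \<omega> = (if z \<in> B then
     stays_in n0 G B k (jump n0 G z (fst (\<omega> 0))) (\<lambda>n. \<omega> (Suc n))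
   else 0)"
  unfolding stays_in_def All_less_Suc2 jchain_Suc_shift[symmetric]
  by auto

lemma trunc_exit_time_mono: "k \<le> k' \<Longrightarrow> trunc_exit_time n0 G B k z \<omega> \<le> trunc_exit_time n0 G B k' z \<omega>"
  unfolding trunc_exit_time_def by (intro sum_mono2) auto

lemma trunc_exit_time_le_exit_time: "trunc_exit_time n0 G B k z \<omega> \<le> exit_time n0 G B z \<omega>"
proof (cases "\<exists>n. jchain n0 G z \<omega> n \<notin> B")
  case True
  define N where "N = (LEAST n. jchain n0 G z \<omega> n \<notin> B)"
  have "jchain n0 G z \<omega> N \<notin> B"
    unfolding N_def using True by (rule LeastI_ex)
  then have "trunc_exit_time n0 G B k z \<omega> \<le> (\<Sum>j<k. if j < N then ennreal (snd (\<omega> j)) else 0)"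
    unfolding trunc_exit_time_def by (intro sum_mono) (auto simp: not_less)
  also have "\<dots> = (\<Sum>j\<in>{..<k} \<inter> {..<N}. ennreal (snd (\<omega> j)))"
    by (simp add: sum.inter_restrict lessThan_def if_distrib cong: if_cong)
  also have "\<dots> \<le> (\<Sum>j<N. ennreal (snd (\<omega> j)))"
    by (intro sum_mono2) auto
  also have "\<dots> = exit_time n0 G B z \<omega>"
    using True by (simp add: exit_time_def N_def)
  finally show ?thesis .
qed (simp add: exit_time_def)

lemma exit_time_eq_SUP_trunc_exit_time:
  assumes "\<exists>n. jchain n0 G z \<omega> n \<notin> B"
  shows "exit_time n0 G B z \<omega> = (SUP k. trunc_exit_time n0 G B k z \<omega>)"
proof (rule antisym)
  define N where "N = (LEAST n. jchain n0 G z \<omega> n \<notin> B)"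
  have "\<forall>i<N. jchain n0 G z \<omega> i \<in> B"
    unfolding N_def using not_less_Least by blast
  then have "trunc_exit_time n0 G B N z \<omega> = (\<Sum>j<N. ennreal (snd (\<omega> j)))"
    unfolding trunc_exit_time_def by (intro sum.cong refl) auto
  then have "exit_time n0 G B z \<omega> = trunc_exit_time n0 G B N z \<omega>"
    using assms by (simp add: exit_time_def N_def)
  then show "exit_time n0 G B z \<omega> \<le> (SUP k. trunc_exit_time n0 G B k z \<omega>)"
    by (auto intro: SUP_upper2)
qed (intro SUP_least trunc_exit_time_le_exit_time)

definition nbr_mean :: "nat \<Rightarrow> nat list set \<Rightarrow> (nat list \<Rightarrow> real) \<Rightarrow> nat list \<Rightarrow> real" where
  "nbr_mean n0 G h z =
    (\<Sum>i<length (nbr_list n0 G z). h (nbr_list n0 G z ! i)) / length (nbr_list n0 G z)"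

lemma nbr_mean_nonneg: "(\<And>w. 0 \<le> h w) \<Longrightarrow> 0 \<le> nbr_mean n0 G h z"
  unfolding nbr_mean_def by (intro divide_nonneg_nonneg sum_nonneg) auto

lemma nbr_mean_add: "nbr_mean n0 G (\<lambda>w. h1 w + h2 w) z = nbr_mean n0 G h1 z + nbr_mean n0 G h2 z"
  unfolding nbr_mean_def by (simp add: sum.distrib add_divide_distrib)

lemma nbr_mean_sum: "nbr_mean n0 G (\<lambda>w. \<Sum>j\<in>S. h j w) z = (\<Sum>j\<in>S. nbr_mean n0 G (h j) z)"
  unfolding nbr_mean_def by (simp add: sum.swap[of _ S] sum_divide_distrib)

lemma nbr_mean_cmult: "nbr_mean n0 G (\<lambda>w. c * h w) z = c * nbr_mean n0 G h z"
  unfolding nbr_mean_def by (simp add: sum_distrib_left)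

lemma nbr_mean_const: "nbr_list n0 G z \<noteq> [] \<Longrightarrow> nbr_mean n0 G (\<lambda>w. c) z = c"
  unfolding nbr_mean_def by simp

lemma nbr_mean_mono:
  "(\<And>w. w \<in> set (nbr_list n0 G z) \<Longrightarrow> h1 w \<le> h2 w) \<Longrightarrow> nbr_mean n0 G h1 z \<le> nbr_mean n0 G h2 z"
  unfolding nbr_mean_def by (intro divide_right_mono sum_mono) auto

lemma ennreal_nbr_mean:
  assumes "\<And>w. 0 \<le> h w"
  shows "ennreal (nbr_mean n0 G h z) =
    (\<Sum>i<length (nbr_list n0 G z). ennreal (h (nbr_list n0 G z ! i))) * ennreal (1 / length (nbr_list n0 G z))"
  using assms unfolding nbr_mean_def
  by (simp add: ennreal_mult''[symmetric] sum_nonneg)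

primrec mean_trunc_exit :: "nat \<Rightarrow> nat list set \<Rightarrow> nat list set \<Rightarrow> nat \<Rightarrow> nat list \<Rightarrow> real" where
  "mean_trunc_exit n0 G B 0 z = 0"
| "mean_trunc_exit n0 G B (Suc k) z =
    (if z \<in> B then 1 + nbr_mean n0 G (mean_trunc_exit n0 G B k) z else 0)"

primrec stay_prob :: "nat \<Rightarrow> nat list set \<Rightarrow> nat list set \<Rightarrow> nat \<Rightarrow> nat list \<Rightarrow> real" where
  "stay_prob n0 G B 0 z = 1"
| "stay_prob n0 G B (Suc k) z = (if z \<in> B then nbr_mean n0 G (stay_prob n0 G B k) z else 0)"

lemma mean_trunc_exit_nonneg: "0 \<le> mean_trunc_exit n0 G B k z"
  by (induction k arbitrary: z) (auto intro!: add_nonneg_nonneg nbr_mean_nonneg)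

lemma stay_prob_nonneg: "0 \<le> stay_prob n0 G B k z"
  by (induction k arbitrary: z) (auto intro!: nbr_mean_nonneg)

lemma nn_integral_trunc_exit_time_Suc:
  assumes "z \<in> B" and "nbr_list n0 G z \<noteq> []"
  shows "(\<integral>\<^sup>+\<omega>. trunc_exit_time n0 G B (Suc k) z \<omega> \<partial>walk_space) = 1 +
    (\<Sum>i<length (nbr_list n0 G z). \<integral>\<^sup>+\<omega>. trunc_exit_time n0 G B k (nbr_list n0 G z ! i) \<omega> \<partial>walk_space)
      * ennreal (1 / length (nbr_list n0 G z))"
proof -
  interpret walk_space: prob_space walk_space
    by (rule prob_space_walk_space)
  define T where "T v = (\<integral>\<^sup>+\<omega>. trunc_exit_time n0 G B k v \<omega> \<partial>walk_space)" for v
  have T_jump: "(\<lambda>u. T (jump n0 G z u)) \<in> borel_measurable borel"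
    using measurable_jump by (rule measurable_compose) simp
  have "(\<integral>\<^sup>+\<omega>. trunc_exit_time n0 G B (Suc k) z \<omega> \<partial>walk_space) =
      (\<integral>\<^sup>+x. \<integral>\<^sup>+\<omega>. ennreal (snd x) + trunc_exit_time n0 G B k (jump n0 G z (fst x)) \<omega> \<partial>walk_space \<partial>step_measure)"
    using assms(1) by (subst nn_integral_walk_space_first_step) (simp_all add: trunc_exit_time_Suc)
  also have "\<dots> = (\<integral>\<^sup>+x. ennreal (snd x) + T (jump n0 G z (fst x)) \<partial>step_measure)"
    by (simp add: nn_integral_add walk_space.emeasure_space_1 T_def)
  also have "\<dots> = 1 + (\<integral>\<^sup>+u. T (jump n0 G z u) \<partial>uniform_measure lborel {0..1})"
    using T_jump by (simp add: nn_integral_add nn_integral_step_measure_snd nn_integral_step_measure_fst[OF T_jump])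
  also have "\<dots> = 1 + (\<Sum>i<length (nbr_list n0 G z). T (nbr_list n0 G z ! i)) * ennreal (1 / length (nbr_list n0 G z))"
    by (simp add: nn_integral_jump[OF assms(2), of T])
  finally show ?thesis
    unfolding T_def .
qed

lemma nn_integral_stays_in_Suc:
  assumes "z \<in> B" and "nbr_list n0 G z \<noteq> []"
  shows "(\<integral>\<^sup>+\<omega>. stays_in n0 G B (Suc k) z \<omega> \<partial>walk_space) =
    (\<Sum>i<length (nbr_list n0 G z). \<integral>\<^sup>+\<omega>. stays_in n0 G B k (nbr_list n0 G z ! i) \<omega> \<partial>walk_space)
      * ennreal (1 / length (nbr_list n0 G z))"
proof -
  define I where "I v = (\<integral>\<^sup>+\<omega>. stays_in n0 G B k v \<omega> \<partial>walk_space)" for v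
  have I_jump: "(\<lambda>u. I (jump n0 G z u)) \<in> borel_measurable borel"
    using measurable_jump by (rule measurable_compose) simp
  have "(\<integral>\<^sup>+\<omega>. stays_in n0 G B (Suc k) z \<omega> \<partial>walk_space) = (\<integral>\<^sup>+x. I (jump n0 G z (fst x)) \<partial>step_measure)"
    using assms(1) by (subst nn_integral_walk_space_first_step) (simp_all add: stays_in_Suc I_def)
  also have "\<dots> = (\<integral>\<^sup>+u. I (jump n0 G z u) \<partial>uniform_measure lborel {0..1})"
    by (rule nn_integral_step_measure_fst[OF I_jump])
  also have "\<dots> = (\<Sum>i<length (nbr_list n0 G z). I (nbr_list n0 G z ! i)) * ennreal (1 / length (nbr_list n0 G z))"
    by (rule nn_integral_jump[OF assms(2)])
  finally show ?thesis
    unfolding I_def .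
qed

lemma set_nbr_list_subset: "set (nbr_list n0 G z) \<subseteq> G"
  unfolding nbr_list_def by auto

lemma mean_trunc_exit_le_supersolution:
  assumes "\<And>z. z \<in> G \<Longrightarrow> 0 \<le> f z"
    and "\<And>z. z \<in> B \<Longrightarrow> 1 + nbr_mean n0 G f z \<le> f z"
    and "z \<in> G"
  shows "mean_trunc_exit n0 G B k z \<le> f z"
  using assms(3)
proof (induction k arbitrary: z)
  case (Suc k)
  show ?case
  proof (cases "z \<in> B")
    case True
    have "nbr_mean n0 G (mean_trunc_exit n0 G B k) z \<le> nbr_mean n0 G f z"
      by (rule nbr_mean_mono) (use Suc.IH set_nbr_list_subset in blast)
    with assms(2)[OF True] show ?thesis
      using True by simp
  qed (use assms(1) Suc.prems in simp)
qed (use assms(1) in simp)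

lemma subsolution_le_mean_trunc_exit:
  assumes "\<And>z. z \<in> G \<Longrightarrow> z \<notin> B \<Longrightarrow> g z \<le> 0"
    and "\<And>z. z \<in> B \<Longrightarrow> g z \<le> 1 + nbr_mean n0 G g z"
    and "\<And>z. z \<in> G \<Longrightarrow> g z \<le> C"
    and "z \<in> G"
  shows "g z \<le> mean_trunc_exit n0 G B k z + C * stay_prob n0 G B k z"
  using assms(4)
proof (induction k arbitrary: z)
  case (Suc k)
  show ?case
  proof (cases "z \<in> B")
    case True
    have "nbr_mean n0 G g z \<le> nbr_mean n0 G (\<lambda>w. mean_trunc_exit n0 G B k w + C * stay_prob n0 G B k w) z"
      by (rule nbr_mean_mono) (use Suc.IH set_nbr_list_subset in blast)
    with assms(2)[OF True] show ?thesis
      using True by (simp add: nbr_mean_add nbr_mean_cmult)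
  qed (use assms(1) Suc.prems in simp)
qed (use assms(3) in simp)


context
  fixes n0 :: nat and G B :: "nat list set"
  assumes nbr_list_nonempty: "\<And>z. z \<in> B \<Longrightarrow> nbr_list n0 G z \<noteq> []"
begin

lemma nn_integral_trunc_exit_time:
  "(\<integral>\<^sup>+\<omega>. trunc_exit_time n0 G B k z \<omega> \<partial>walk_space) = ennreal (mean_trunc_exit n0 G B k z)"
proof (induction k arbitrary: z)
  case 0
  then show ?case
    by (simp add: trunc_exit_time_def)
next
  case (Suc k)
  show ?case
  proof (cases "z \<in> B")
    case True
    then show ?thesis
      by (simp add: nn_integral_trunc_exit_time_Suc nbr_list_nonempty Suc.IH ennreal_nbr_mean
          mean_trunc_exit_nonneg nbr_mean_nonneg)
  qed (simp add: trunc_exit_time_Suc)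
qed

lemma nn_integral_stays_in:
  "(\<integral>\<^sup>+\<omega>. stays_in n0 G B k z \<omega> \<partial>walk_space) = ennreal (stay_prob n0 G B k z)"
proof (induction k arbitrary: z)
  case 0
  interpret walk_space: prob_space walk_space
    by (rule prob_space_walk_space)
  show ?case
    using walk_space.emeasure_space_1 by (simp add: stays_in_def)
next
  case (Suc k)
  show ?case
  proof (cases "z \<in> B")
    case True
    then show ?thesis
      by (simp add: nn_integral_stays_in_Suc nbr_list_nonempty Suc.IH ennreal_nbr_mean stay_prob_nonneg)
  qed (simp add: stays_in_Suc)
qed

lemma mean_trunc_exit_eq_sum_stay_prob:
  "mean_trunc_exit n0 G B k z = (\<Sum>j<k. stay_prob n0 G B (Suc j) z)"
proof (induction k arbitrary: z)
  case (Suc k)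
  show ?case
  proof (cases "z \<in> B")
    case True
    have IH: "mean_trunc_exit n0 G B k = (\<lambda>w. \<Sum>j<k. stay_prob n0 G B (Suc j) w)"
      using Suc.IH by (rule ext)
    have step: "stay_prob n0 G B (Suc j) z = nbr_mean n0 G (stay_prob n0 G B j) z" for j
      using True by simp
    have "1 = stay_prob n0 G B 1 z"
      using True nbr_list_nonempty by (simp add: nbr_mean_def)
    then have "mean_trunc_exit n0 G B (Suc k) z =
        stay_prob n0 G B 1 z + (\<Sum>j<k. stay_prob n0 G B (Suc (Suc j)) z)"
      using True by (simp only: mean_trunc_exit.simps(2) if_True IH nbr_mean_sum step)
    also have "\<dots> = (\<Sum>j<Suc k. stay_prob n0 G B (Suc j) z)"
      by (simp only: sum.lessThan_Suc_shift One_nat_def)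
    finally show ?thesis .
  qed simp
qed simp

lemma stay_prob_tendsto_0:
  assumes "\<And>k. mean_trunc_exit n0 G B k x \<le> F"
  shows "(\<lambda>k. stay_prob n0 G B k x) \<longlonglongrightarrow> 0"
proof -
  have "summable (\<lambda>j. stay_prob n0 G B (Suc j) x)"
    by (intro summableI_nonneg_bounded[where x=F] stay_prob_nonneg)
      (metis assms mean_trunc_exit_eq_sum_stay_prob)
  then show ?thesis
    by (subst filterlim_sequentially_Suc[symmetric]) (rule summable_LIMSEQ_zero)
qed

lemma emeasure_never_exit_eq_0:
  assumes "\<And>k. mean_trunc_exit n0 G B k x \<le> F"
  shows "emeasure walk_space {\<omega>\<in>space walk_space. \<forall>n. jchain n0 G x \<omega> n \<in> B} = 0"
proof -
  interpret walk_space: prob_space walk_space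
    by (rule prob_space_walk_space)
  let ?never = "{\<omega>\<in>space walk_space. \<forall>n. jchain n0 G x \<omega> n \<in> B}"
  have "emeasure walk_space ?never = (\<integral>\<^sup>+\<omega>. indicator ?never \<omega> \<partial>walk_space)"
    by simp
  also have "\<dots> \<le> (\<integral>\<^sup>+\<omega>. stays_in n0 G B k x \<omega> \<partial>walk_space)" for k
    by (intro nn_integral_mono) (auto simp: stays_in_def indicator_def)
  finally have "emeasure walk_space ?never \<le> (\<integral>\<^sup>+\<omega>. stays_in n0 G B k x \<omega> \<partial>walk_space)" for k .
  then have "walk_space.prob ?never \<le> stay_prob n0 G B k x" for k
    by (simp add: nn_integral_stays_in nbr_list_nonempty walk_space.emeasure_eq_measure stay_prob_nonneg)
  then have "walk_space.prob ?never \<le> 0"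
    by (intro LIMSEQ_le_const[OF stay_prob_tendsto_0[OF assms]]) auto
  then show ?thesis
    by (simp add: walk_space.emeasure_eq_measure measure_le_0_iff)
qed

lemma exp_exit_eq_SUP_mean_trunc_exit:
  assumes "emeasure walk_space {\<omega>\<in>space walk_space. \<forall>n. jchain n0 G x \<omega> n \<in> B} = 0"
  shows "exp_exit n0 G B x = (SUP k. ennreal (mean_trunc_exit n0 G B k x))"
proof -
  let ?never = "{\<omega>\<in>space walk_space. \<forall>n. jchain n0 G x \<omega> n \<in> B}"
  have "{\<omega>\<in>space walk_space. exit_time n0 G B x \<omega> \<noteq> (SUP k. trunc_exit_time n0 G B k x \<omega>)} \<subseteq> ?never"
    using exit_time_eq_SUP_trunc_exit_time by blast
  then have "AE \<omega> in walk_space. exit_time n0 G B x \<omega> = (SUP k. trunc_exit_time n0 G B k x \<omega>)"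
    using assms by (intro AE_I'[of ?never]) (auto intro: null_setsI)
  then have "exp_exit n0 G B x = (\<integral>\<^sup>+\<omega>. (SUP k. trunc_exit_time n0 G B k x \<omega>) \<partial>walk_space)"
    unfolding exp_exit_def by (rule nn_integral_cong_AE)
  also have "\<dots> = (SUP k. \<integral>\<^sup>+\<omega>. trunc_exit_time n0 G B k x \<omega> \<partial>walk_space)"
    by (rule nn_integral_monotone_convergence_SUP) (auto simp: incseq_def le_fun_def trunc_exit_time_mono)
  finally show ?thesis
    by (simp add: nn_integral_trunc_exit_time)
qed

lemma exp_exit_le_of_bounded:
  assumes "\<And>k. mean_trunc_exit n0 G B k x \<le> F"
  shows "exp_exit n0 G B x \<le> ennreal F"
  unfolding exp_exit_eq_SUP_mean_trunc_exit[OF emeasure_never_exit_eq_0[OF assms]]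
  using assms by (intro SUP_least ennreal_leI)

lemma mean_trunc_exit_le_exp_exit: "ennreal (mean_trunc_exit n0 G B k x) \<le> exp_exit n0 G B x"
proof -
  have "ennreal (mean_trunc_exit n0 G B k x) = (\<integral>\<^sup>+\<omega>. trunc_exit_time n0 G B k x \<omega> \<partial>walk_space)"
    by (rule nn_integral_trunc_exit_time[symmetric])
  also have "\<dots> \<le> exp_exit n0 G B x"
    unfolding exp_exit_def by (intro nn_integral_mono trunc_exit_time_le_exit_time)
  finally show ?thesis .
qed

lemma exp_exit_le_supersolution:
  assumes "\<And>z. z \<in> G \<Longrightarrow> 0 \<le> f z"
    and "\<And>z. z \<in> B \<Longrightarrow> 1 + nbr_mean n0 G f z \<le> f z"
    and "x \<in> G"
  shows "exp_exit n0 G B x \<le> ennreal (f x)"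
  using assms by (intro exp_exit_le_of_bounded mean_trunc_exit_le_supersolution)

lemma subsolution_le_exp_exit:
  assumes "\<And>z. z \<in> G \<Longrightarrow> z \<notin> B \<Longrightarrow> g z \<le> 0"
    and "\<And>z. z \<in> B \<Longrightarrow> g z \<le> 1 + nbr_mean n0 G g z"
    and "\<And>z. z \<in> G \<Longrightarrow> g z \<le> C"
    and "x \<in> G"
  shows "ennreal (g x) \<le> exp_exit n0 G B x"
proof (cases "exp_exit n0 G B x = \<infinity>")
  case False
  define F where "F = enn2real (exp_exit n0 G B x)"
  have F: "exp_exit n0 G B x = ennreal F"
    using False unfolding F_def by (simp add: less_top)
  have "0 \<le> F"
    by (simp add: F_def)
  then have bounded: "mean_trunc_exit n0 G B k x \<le> F" for k
    using mean_trunc_exit_le_exp_exit[of k x] by (simp add: F)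
  have "g x \<le> F + C * stay_prob n0 G B k x" for k
    using subsolution_le_mean_trunc_exit[where B=B and k=k, OF assms] bounded[of k] by linarith
  moreover have "(\<lambda>k. F + C * stay_prob n0 G B k x) \<longlonglongrightarrow> F + C * 0"
    by (intro tendsto_intros stay_prob_tendsto_0[OF bounded])
  ultimately have "g x \<le> F"
    using LIMSEQ_le_const by fastforce
  then show ?thesis
    by (simp add: F ennreal_leI)
qed simp

end

section \<open>Walks in subgraphs of the tree\<close>

lemma tadj_sym: "tadj x y \<Longrightarrow> tadj y x"
  unfolding tadj_def by auto

lemma tadj_irrefl: "\<not> tadj x x"
  unfolding tadj_def by auto

lemma tadj_cases: "tadj y w \<Longrightarrow> (\<exists>i. w = y @ [i]) \<or> (y \<noteq> [] \<and> w = butlast y)"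
  unfolding tadj_def by auto

lemma tadj_length: "tadj x y \<Longrightarrow> length y = Suc (length x) \<or> length x = Suc (length y)"
  unfolding tadj_def by auto

lemma gwalk_Cons: "gwalk G (x # p) \<longleftrightarrow> x \<in> G \<and> (p = [] \<or> tadj x (hd p) \<and> gwalk G p)"
proof (cases p)
  case (Cons y q)
  have "(\<forall>i. Suc i < length (x # p) \<longrightarrow> tadj ((x # p) ! i) ((x # p) ! Suc i)) \<longleftrightarrow>
      tadj x y \<and> (\<forall>i. Suc i < length p \<longrightarrow> tadj (p ! i) (p ! Suc i))"
    using Cons by (auto simp: All_less_Suc2[where n="length q", simplified] less_Suc_eq_0_disj)
  then show ?thesis
    using Cons by (auto simp: gwalk_def)
qed (simp add: gwalk_def)

lemma gwalk_singleton [simp]: "gwalk G [x] \<longleftrightarrow> x \<in> G"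
  by (simp add: gwalk_Cons)

lemma gwalk_append:
  assumes "gwalk G p" "gwalk G q" "tadj (last p) (hd q)"
  shows "gwalk G (p @ q)"
  using assms
proof (induction p)
  case (Cons x p)
  have "q \<noteq> []"
    using Cons.prems by (simp add: gwalk_def)
  with Cons show ?case
    by (cases "p = []") (auto simp: gwalk_Cons)
qed (simp add: gwalk_def)

lemma gwalk_join:
  assumes "gwalk G p" "gwalk G q" "last p = hd q"
  shows "gwalk G (p @ tl q)"
proof (cases "tl q = []")
  case False
  have "q = hd q # tl q"
    using assms(2) by (simp add: gwalk_def)
  then have "tadj (hd q) (hd (tl q))" "gwalk G (tl q)"
    using assms(2) False by (metis gwalk_Cons)+
  then show ?thesis
    using assms by (intro gwalk_append) auto
qed (use assms in simp)

lemma gwalk_rev: "gwalk G p \<Longrightarrow> gwalk G (rev p)"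
proof (induction p)
  case (Cons x p)
  show ?case
  proof (cases "p = []")
    case False
    then have "gwalk G (rev p @ [x])"
      using Cons by (intro gwalk_append) (auto simp: gwalk_Cons tadj_sym last_rev)
    then show ?thesis
      by simp
  qed (use Cons in simp)
qed (simp add: gwalk_def)

lemma gwalk_drop: "gwalk G p \<Longrightarrow> i < length p \<Longrightarrow> gwalk G (drop i p)"
  unfolding gwalk_def by (auto dest: in_set_dropD)

lemma gwalk_take: "gwalk G p \<Longrightarrow> 0 < i \<Longrightarrow> gwalk G (take i p)"
  unfolding gwalk_def by (auto dest: in_set_takeD)

lemma gwalk_nth: "gwalk G p \<Longrightarrow> i < length p \<Longrightarrow> p ! i \<in> G"
  unfolding gwalk_def by auto

lemma gwalk_tadj_nth: "gwalk G p \<Longrightarrow> Suc i < length p \<Longrightarrow> tadj (p ! i) (p ! Suc i)"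
  unfolding gwalk_def by auto

text \<open>Every step changes the depth by one.\<close>
lemma gwalk_parity: "gwalk G p \<Longrightarrow> even (length p - 1 + length (hd p) + length (last p))"
proof (induction p)
  case (Cons x p)
  then show ?case
    by (cases p) (auto simp: gwalk_Cons dest: tadj_length)
qed (simp add: gwalk_def)

lemma gwalk_length_last_le: "gwalk G p \<Longrightarrow> length (last p) \<le> length (hd p) + (length p - 1)"
proof (induction p)
  case (Cons x p)
  then show ?case
    by (cases p) (auto simp: gwalk_Cons dest: tadj_length)
qed (simp add: gwalk_def)

lemma gwalk_leaves_subtree:
  assumes "gwalk G p" "prefix w (hd p)" "\<not> prefix w (last p)"
  shows "\<exists>i. Suc i < length p \<and> p ! i = w \<and> p ! Suc i = butlast w"
  using assms
proof (induction p)
  case (Cons x q)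
  show ?case
  proof (cases q)
    case (Cons y q')
    have adj: "tadj x y" and q: "gwalk G q"
      using Cons.prems \<open>q = y # q'\<close> by (auto simp: gwalk_Cons)
    show ?thesis
    proof (cases "prefix w y")
      case True
      then obtain i where "Suc i < length q \<and> q ! i = w \<and> q ! Suc i = butlast w"
        using Cons.IH q Cons.prems \<open>q = y # q'\<close> by auto
      then show ?thesis
        by (intro exI[of _ "Suc i"]) auto
    next
      case False
      obtain s where x: "x = w @ s"
        using Cons.prems by (auto simp: prefix_def)
      from tadj_cases[OF adj] False have "y = butlast x" "x \<noteq> []"
        by (auto simp: x)
      with False have "s = []"
        by (cases s rule: rev_cases) (auto simp: x butlast_append)
      then show ?thesis
        using \<open>y = butlast x\<close> \<open>q = y # q'\<close> x by (intro exI[of _ 0]) auto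
    qed
  qed (use Cons.prems in simp)
qed (simp add: gwalk_def)

section \<open>Distance in a connected subgraph\<close>

locale connected_subtree =
  fixes G :: "nat list set"
  assumes connected: "connected_sub G"
begin

abbreviation d :: "nat list \<Rightarrow> nat list \<Rightarrow> nat" where
  "d \<equiv> gdist G"

lemma exists_geodesic:
  assumes "x \<in> G" "y \<in> G"
  shows "\<exists>p. gwalk G p \<and> hd p = x \<and> last p = y \<and> length p = Suc (d x y)"
proof -
  obtain p where "gwalk G p" "hd p = x" "last p = y"
    using connected assms unfolding connected_sub_def by blast
  then have "\<exists>n p. gwalk G p \<and> hd p = x \<and> last p = y \<and> length p = Suc n"
    by (intro exI[of _ "length p - 1"] exI[of _ p]) (auto simp: gwalk_def)
  then show ?thesis
    unfolding gdist_def by (rule LeastI_ex)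
qed

lemma gdist_le_length: "gwalk G p \<Longrightarrow> hd p = x \<Longrightarrow> last p = y \<Longrightarrow> d x y \<le> length p - 1"
  unfolding gdist_def by (rule Least_le) (auto simp: gwalk_def)

lemma gdist_self [simp]: "x \<in> G \<Longrightarrow> d x x = 0"
  using gdist_le_length[of "[x]" x x] by simp

lemma gdist_eq_0_iff: "x \<in> G \<Longrightarrow> y \<in> G \<Longrightarrow> d x y = 0 \<longleftrightarrow> x = y"
  using exists_geodesic[of x y] by (auto simp: length_Suc_conv)

lemma gdist_sym: "x \<in> G \<Longrightarrow> y \<in> G \<Longrightarrow> d x y = d y x"
proof -
  have "d a b \<le> d b a" if ab: "a \<in> G" "b \<in> G" for a b
  proof -
    obtain p where p: "gwalk G p" "hd p = b" "last p = a" "length p = Suc (d b a)"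
      using exists_geodesic[OF ab(2,1)] by blast
    then have "d a b \<le> length (rev p) - 1"
      by (intro gdist_le_length) (auto simp: gwalk_rev hd_rev last_rev)
    with p show ?thesis
      by simp
  qed
  then show "x \<in> G \<Longrightarrow> y \<in> G \<Longrightarrow> d x y = d y x"
    by (simp add: order_antisym)
qed

lemma gdist_triangle: "x \<in> G \<Longrightarrow> y \<in> G \<Longrightarrow> z \<in> G \<Longrightarrow> d x z \<le> d x y + d y z"
proof -
  assume G: "x \<in> G" "y \<in> G" "z \<in> G"
  obtain p where p: "gwalk G p" "hd p = x" "last p = y" "length p = Suc (d x y)"
    using exists_geodesic G by blast
  obtain q where q: "gwalk G q" "hd q = y" "last q = z" "length q = Suc (d y z)"
    using exists_geodesic G by blast
  have "d x z \<le> length (p @ tl q) - 1"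
  proof (rule gdist_le_length)
    show "gwalk G (p @ tl q)"
      using p q by (intro gwalk_join) auto
    show "hd (p @ tl q) = x"
      using p by (cases p) (auto simp: gwalk_def)
    show "last (p @ tl q) = z"
      using p q by (cases q) (auto simp: gwalk_def)
  qed
  with p q show ?thesis
    by simp
qed

lemma gdist_nth_last: "gwalk G p \<Longrightarrow> last p = y \<Longrightarrow> k < length p \<Longrightarrow> d (p ! k) y \<le> length p - 1 - k"
  using gdist_le_length[of "drop k p" "p ! k" y] by (auto simp: gwalk_drop hd_drop_conv_nth)

lemma gdist_hd_nth:
  assumes "gwalk G p" "hd p = x" "k < length p"
  shows "d x (p ! k) \<le> k"
proof -
  have "d x (p ! k) \<le> length (take (Suc k) p) - 1"
  proof (rule gdist_le_length)
    show "gwalk G (take (Suc k) p)"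
      using assms by (intro gwalk_take) auto
    show "hd (take (Suc k) p) = x"
      using assms by (simp add: hd_take)
    show "last (take (Suc k) p) = p ! k"
      using assms by (simp add: take_Suc_conv_app_nth)
  qed
  with assms show ?thesis
    by simp
qed

lemma gdist_tadj:
  assumes "x \<in> G" "y \<in> G" "tadj x y"
  shows "d x y = 1"
proof -
  have "d x y \<le> 1"
    using assms gdist_le_length[of "[x, y]" x y] by (simp add: gwalk_Cons)
  moreover have "x \<noteq> y"
    using assms(3) tadj_irrefl by blast
  ultimately show ?thesis
    using gdist_eq_0_iff[OF assms(1,2)] by linarith
qed

lemma even_gdist_length: "x \<in> G \<Longrightarrow> y \<in> G \<Longrightarrow> even (d x y + length x + length y)"
  using exists_geodesic[of x y] gwalk_parity by fastforce

lemma length_le_gdist: "x \<in> G \<Longrightarrow> y \<in> G \<Longrightarrow> length y \<le> length x + d x y"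
  using exists_geodesic[of x y] gwalk_length_last_le by fastforce

definition nbrs :: "nat list \<Rightarrow> nat list set" where
  "nbrs y = {w\<in>G. tadj y w}"

lemma nbrs_subset: "nbrs y \<subseteq> G"
  unfolding nbrs_def by auto

lemma tadj_nbrs: "w \<in> nbrs y \<Longrightarrow> tadj y w"
  unfolding nbrs_def by auto

lemma gdist_nbrs: "y \<in> G \<Longrightarrow> w \<in> nbrs y \<Longrightarrow> d y w = 1"
  unfolding nbrs_def using gdist_tadj by blast

lemma gdeg_eq_card_nbrs: "gdeg G y = card (nbrs y)"
  unfolding gdeg_def nbrs_def ..

lemma exists_nbr_closer:
  assumes "y \<in> G" "a \<in> G" "y \<noteq> a"
  shows "\<exists>w\<in>nbrs y. d w a + 1 = d y a"
proof -
  obtain p where p: "gwalk G p" "hd p = y" "last p = a" "length p = Suc (d y a)"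
    using exists_geodesic[OF assms(1,2)] by blast
  have "d y a \<noteq> 0"
    using gdist_eq_0_iff assms by blast
  then have len: "Suc 0 < length p"
    using p by simp
  have y: "p ! 0 = y"
    using p by (simp add: hd_conv_nth gwalk_def)
  have w: "p ! 1 \<in> nbrs y"
    using gwalk_tadj_nth[OF p(1), of 0] gwalk_nth[OF p(1), of 1] len y by (simp add: nbrs_def)
  have "d (p ! 1) a \<le> d y a - 1"
    using gdist_nth_last[OF p(1) p(3), of 1] len p by simp
  moreover have "d y a \<le> d y (p ! 1) + d (p ! 1) a"
    using assms w nbrs_subset by (intro gdist_triangle) auto
  ultimately show ?thesis
    using w assms gdist_nbrs \<open>d y a \<noteq> 0\<close> by (intro bexI[of _ "p ! 1"]) auto
qed

lemma closer_child_prefix: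
  assumes "y @ [i] \<in> G" "a \<in> G" "d (y @ [i]) a < d y a"
  shows "prefix (y @ [i]) a"
proof (rule ccontr)
  assume "\<not> prefix (y @ [i]) a"
  moreover obtain p where p: "gwalk G p" "hd p = y @ [i]" "last p = a" "length p = Suc (d (y @ [i]) a)"
    using exists_geodesic[OF assms(1,2)] by blast
  ultimately obtain j where j: "Suc j < length p" "p ! Suc j = y"
    using gwalk_leaves_subtree[OF p(1), of "y @ [i]"] by auto
  have "d (p ! Suc j) a \<le> length p - 1 - Suc j"
    by (rule gdist_nth_last[OF p(1) p(3) j(1)])
  with j p assms(3) show False
    by simp
qed

lemma closer_parent_not_prefix:
  assumes "y \<noteq> []" "butlast y \<in> G" "a \<in> G" "d (butlast y) a < d y a"
  shows "\<not> prefix y a"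
proof
  assume "prefix y a"
  obtain p where p: "gwalk G p" "hd p = butlast y" "last p = a" "length p = Suc (d (butlast y) a)"
    using exists_geodesic[OF assms(2,3)] by blast
  have not_prefix: "\<not> prefix y (butlast y)"
    using assms(1) prefix_length_le[of y "butlast y"] by (cases y) auto
  obtain j where j: "Suc j < length (rev p)" "rev p ! j = y"
    using gwalk_leaves_subtree[OF gwalk_rev[OF p(1)], of y] p \<open>prefix y a\<close> not_prefix
    by (auto simp: hd_rev last_rev)
  define k where "k = length p - 1 - j"
  have k: "k < length p" "p ! k = y"
    using j by (auto simp: k_def rev_nth)
  have "k \<noteq> 0"
  proof
    assume "k = 0"
    then have "length (butlast y) = length y"
      using k p(1,2) by (simp add: hd_conv_nth gwalk_def)
    moreover have "length (butlast y) < length y"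
      using assms(1) by simp
    ultimately show False
      by simp
  qed
  have "d (p ! k) a \<le> length p - 1 - k"
    by (rule gdist_nth_last[OF p(1) p(3) k(1)])
  with k \<open>k \<noteq> 0\<close> p assms(4) show False
    by simp
qed

text \<open>A closer child of \<open>y\<close> is an ancestor of \<open>a\<close> and a closer parent is not, so geodesics are unique.\<close>
lemma nbr_closer_unique:
  assumes "a \<in> G" "w1 \<in> nbrs y" "w2 \<in> nbrs y" "d w1 a < d y a" "d w2 a < d y a"
  shows "w1 = w2"
proof -
  have child: "prefix (y @ [i]) a" if "y @ [i] \<in> nbrs y" "d (y @ [i]) a < d y a" for i
    using closer_child_prefix[OF _ assms(1)] that nbrs_subset by blast
  have parent: "\<not> prefix y a" if "y \<noteq> []" "butlast y \<in> nbrs y" "d (butlast y) a < d y a"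
    using closer_parent_not_prefix[OF _ _ assms(1)] that nbrs_subset by blast
  from tadj_cases[OF tadj_nbrs[OF assms(2)]] tadj_cases[OF tadj_nbrs[OF assms(3)]] show ?thesis
  proof (elim disjE exE conjE)
    fix i j
    assume "w1 = y @ [i]" "w2 = y @ [j]"
    with assms child have "prefix (y @ [i]) a" "prefix (y @ [j]) a"
      by blast+
    then show ?thesis
      using \<open>w1 = y @ [i]\<close> \<open>w2 = y @ [j]\<close> by (auto simp: prefix_def)
  next
    fix i
    assume "w1 = y @ [i]" "y \<noteq> []" "w2 = butlast y"
    with assms child parent have "prefix (y @ [i]) a" "\<not> prefix y a"
      by blast+
    then show ?thesis
      by (auto simp: prefix_def)
  next
    fix j
    assume "w2 = y @ [j]" "y \<noteq> []" "w1 = butlast y"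
    with assms child parent have "prefix (y @ [j]) a" "\<not> prefix y a"
      by blast+
    then show ?thesis
      by (auto simp: prefix_def)
  qed simp
qed

lemma gdist_nbr_cases:
  assumes "y \<in> G" "a \<in> G" "w \<in> nbrs y"
  shows "d w a = d y a + 1 \<or> d w a + 1 = d y a"
proof -
  have w: "w \<in> G" "d w y = 1"
    using assms nbrs_subset gdist_nbrs[OF assms(1,3)] gdist_sym[of w y] by auto
  then have "d w a \<le> d y a + 1" "d y a \<le> d w a + 1"
    using gdist_triangle[OF w(1) assms(1,2)] gdist_triangle[OF assms(1) w(1) assms(2)] gdist_sym[OF w(1) assms(1)]
    by auto
  moreover have "d w a \<noteq> d y a"
  proof
    assume "d w a = d y a"
    moreover have "even (d w a + length w + length a)" "even (d y a + length y + length a)"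
      using even_gdist_length w assms by auto
    moreover have "length w = Suc (length y) \<or> length y = Suc (length w)"
      using tadj_length[OF tadj_nbrs[OF assms(3)]] by auto
    ultimately show False
      by presburger
  qed
  ultimately show ?thesis
    by linarith
qed

end

section \<open>Harmonic analysis on the subtree\<close>

locale infinite_subtree = connected_subtree +
  fixes n0 :: nat
  assumes tree_vertices: "\<forall>v\<in>G. tree_vertex n0 v"
    and infinite_vertices: "infinite G"
begin

lemma finite_nbrs [simp]: "finite (nbrs y)"
proof (rule finite_subset)
  show "nbrs y \<subseteq> insert (butlast y) ((\<lambda>i. y @ [i]) ` {..<n0})"
    unfolding nbrs_def using tadj_cases tree_vertices by (fastforce simp: tree_vertex_def)
qed simp

lemma nbrs_nonempty: "y \<in> G \<Longrightarrow> nbrs y \<noteq> {}"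
proof -
  assume "y \<in> G"
  moreover obtain v where "v \<in> G - {y}"
    using infinite_imp_nonempty[OF infinite_remove[OF infinite_vertices]] by blast
  ultimately show "nbrs y \<noteq> {}"
    using exists_nbr_closer[of y v] by auto
qed

lemma gdeg_pos: "y \<in> G \<Longrightarrow> 0 < gdeg G y"
  using nbrs_nonempty by (simp add: gdeg_eq_card_nbrs card_gt_0_iff)

lemma set_nbr_list: "set (nbr_list n0 G z) = nbrs z"
proof
  show "set (nbr_list n0 G z) \<subseteq> nbrs z"
    unfolding nbr_list_def nbrs_def tadj_def by (auto split: if_splits intro: append_butlast_last_id[symmetric])
  show "nbrs z \<subseteq> set (nbr_list n0 G z)"
  proof
    fix w
    assume w: "w \<in> nbrs z"
    have "i < n0" if "w = z @ [i]" for i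
    proof -
      have "z @ [i] \<in> G"
        using w that nbrs_subset by blast
      with tree_vertices show ?thesis
        by (simp add: tree_vertex_def)
    qed
    with w tadj_cases[OF tadj_nbrs[OF w]] nbrs_subset show "w \<in> set (nbr_list n0 G z)"
      unfolding nbr_list_def by auto
  qed
qed

lemma distinct_nbr_list: "distinct (nbr_list n0 G z)"
proof -
  have "butlast z \<notin> set (map (\<lambda>i. z @ [i]) [0..<n0])"
    by (auto dest: arg_cong[of _ _ length])
  then show ?thesis
    unfolding nbr_list_def by (auto simp: distinct_map inj_on_def)
qed

lemma nbr_list_nonempty: "z \<in> G \<Longrightarrow> nbr_list n0 G z \<noteq> []"
  using set_nbr_list[of z] nbrs_nonempty[of z] by auto

lemma nbr_mean_eq: "nbr_mean n0 G h z = (\<Sum>w\<in>nbrs z. h w) / gdeg G z"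
proof -
  let ?l = "nbr_list n0 G z"
  have "(\<Sum>i<length ?l. h (?l ! i)) = (\<Sum>w\<in>nbrs z. h w)"
    using sum_list_distinct_conv_sum_set[OF distinct_nbr_list, of h]
    by (simp add: sum_list_sum_nth atLeast0LessThan set_nbr_list)
  moreover have "length ?l = gdeg G z"
    using distinct_card[OF distinct_nbr_list] by (simp add: set_nbr_list gdeg_eq_card_nbrs)
  ultimately show ?thesis
    unfolding nbr_mean_def by simp
qed

text \<open>All neighbours of \<open>y \<noteq> a\<close> but the one on the geodesic to \<open>a\<close> are one step farther from \<open>a\<close>.\<close>
lemma sum_nbrs_gdist:
  assumes "y \<in> G" "a \<in> G"
  shows "(\<Sum>w\<in>nbrs y. real (d w a)) =
    gdeg G y * real (d y a) + gdeg G y - 2 + (if y = a then 2 else 0)"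
proof (cases "y = a")
  case True
  have "real (d w a) = 1" if "w \<in> nbrs y" for w
    using that True assms gdist_nbrs[of a w] gdist_sym[of w a] nbrs_subset by auto
  then have "(\<Sum>w\<in>nbrs y. real (d w a)) = (\<Sum>w\<in>nbrs y. 1)"
    by (rule sum.cong[OF refl])
  then show ?thesis
    using True assms by (simp add: gdeg_eq_card_nbrs)
next
  case False
  obtain w0 where w0: "w0 \<in> nbrs y" "d w0 a + 1 = d y a"
    using exists_nbr_closer[OF assms False] by blast
  have farther: "d w a = d y a + 1" if "w \<in> nbrs y - {w0}" for w
    using nbr_closer_unique[OF assms(2) _ w0(1), of w] gdist_nbr_cases[OF assms, of w] that w0 by auto
  have "card (nbrs y) \<ge> 1"
    using w0(1) card_gt_0_iff[of "nbrs y"] by fastforce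
  have "(\<Sum>w\<in>nbrs y. real (d w a)) = real (d w0 a) + (\<Sum>w\<in>nbrs y - {w0}. real (d y a) + 1)"
    using w0 farther by (simp add: sum.remove)
  also have "\<dots> = real (d w0 a) + (real (gdeg G y) - 1) * (real (d y a) + 1)"
    using w0 \<open>card (nbrs y) \<ge> 1\<close> by (simp add: gdeg_eq_card_nbrs card_Diff_singleton of_nat_diff)
  finally show ?thesis
    using w0 False by (simp add: algebra_simps)
qed

text \<open>
  Times \<open>\<mu>\<^sub>z\<close>, it is the Green function of the walk killed at \<open>e\<close>,
  so \<open>gromov_potential e B y\<close> below is the expected time spent in \<open>B\<close> before hitting \<open>e\<close>.\<close>
definition gromov :: "nat list \<Rightarrow> nat list \<Rightarrow> nat list \<Rightarrow> real" where
  "gromov e y z = (real (d y e) + real (d z e) - real (d y z)) / 2"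

lemma nbr_mean_gromov:
  assumes "y \<in> G" "z \<in> G" "e \<in> G"
  shows "nbr_mean n0 G (\<lambda>w. gromov e w z) y =
    gromov e y z + ((if y = e then 1 else 0) - (if y = z then 1 else 0)) / gdeg G y"
proof -
  have "(\<Sum>w\<in>nbrs y. gromov e w z) =
      ((\<Sum>w\<in>nbrs y. real (d w e)) + gdeg G y * real (d z e) - (\<Sum>w\<in>nbrs y. real (d w z))) / 2"
    unfolding gromov_def
    by (simp add: sum_divide_distrib[symmetric] sum.distrib sum_subtractf gdeg_eq_card_nbrs)
  also have "\<dots> = gdeg G y * gromov e y z + (if y = e then 1 else 0) - (if y = z then 1 else 0)"
    unfolding sum_nbrs_gdist[OF assms(1,3)] sum_nbrs_gdist[OF assms(1,2)] gromov_def
    by (simp add: field_simps)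
  finally show ?thesis
    using gdeg_pos[OF assms(1)] by (simp add: nbr_mean_eq field_simps)
qed

lemma gromov_nonneg: "y \<in> G \<Longrightarrow> z \<in> G \<Longrightarrow> e \<in> G \<Longrightarrow> 0 \<le> gromov e y z"
  unfolding gromov_def using gdist_triangle[of y e z] gdist_sym[of e z] by simp

lemma gromov_le_left: "y \<in> G \<Longrightarrow> z \<in> G \<Longrightarrow> e \<in> G \<Longrightarrow> gromov e y z \<le> d y e"
  unfolding gromov_def using gdist_triangle[of z y e] gdist_sym[of z y] by simp

lemma gromov_le_right: "y \<in> G \<Longrightarrow> z \<in> G \<Longrightarrow> e \<in> G \<Longrightarrow> gromov e y z \<le> d z e"
  unfolding gromov_def using gdist_triangle[of y z e] by simp

lemma gromov_ge: "y \<in> G \<Longrightarrow> z \<in> G \<Longrightarrow> e \<in> G \<Longrightarrow> real (d z e) - real (d y z) \<le> gromov e y z"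
  unfolding gromov_def using gdist_triangle[of z y e] gdist_sym[of z y] by simp

lemma finite_gball:
  assumes "x \<in> G"
  shows "finite (gball G x r)"
proof (rule finite_subset)
  show "gball G x r \<subseteq> {ys. set ys \<subseteq> {..<n0} \<and> length ys \<le> length x + nat \<lceil>r\<rceil>}"
  proof
    fix y
    assume "y \<in> gball G x r"
    then have "y \<in> G" "real (d x y) \<le> r"
      by (auto simp: gball_def)
    moreover from this have "length y \<le> length x + d x y"
      using assms by (intro length_le_gdist)
    ultimately show "y \<in> {ys. set ys \<subseteq> {..<n0} \<and> length ys \<le> length x + nat \<lceil>r\<rceil>}"
      using tree_vertices by (auto simp: tree_vertex_def) linarith
  qed
  show "finite {ys. set ys \<subseteq> {..<n0} \<and> length ys \<le> length x + nat \<lceil>r\<rceil>}"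
    by (rule finite_lists_length_le) simp
qed

end

section \<open>Upper bound for the mean exit time\<close>

context infinite_subtree
begin

definition gromov_potential :: "nat list \<Rightarrow> nat list set \<Rightarrow> nat list \<Rightarrow> real" where
  "gromov_potential e B y = (\<Sum>z\<in>B. gdeg G z * gromov e y z)"

lemma gromov_potential_nonneg: "B \<subseteq> G \<Longrightarrow> e \<in> G \<Longrightarrow> y \<in> G \<Longrightarrow> 0 \<le> gromov_potential e B y"
  unfolding gromov_potential_def by (intro sum_nonneg mult_nonneg_nonneg) (auto intro: gromov_nonneg)

lemma gromov_potential_supersolution:
  assumes "finite B" "B \<subseteq> G" "e \<in> G" "e \<notin> B" "y \<in> B"
  shows "1 + nbr_mean n0 G (gromov_potential e B) y \<le> gromov_potential e B y"
proof -
  have y: "y \<in> G" "y \<noteq> e" "0 < gdeg G y"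
    using assms gdeg_pos by auto
  have "nbr_mean n0 G (gromov_potential e B) y = (\<Sum>z\<in>B. gdeg G z * nbr_mean n0 G (\<lambda>w. gromov e w z) y)"
    unfolding gromov_potential_def by (simp add: nbr_mean_sum nbr_mean_cmult)
  also have "\<dots> = (\<Sum>z\<in>B. gdeg G z * gromov e y z - (if z = y then 1 else 0))"
    using assms y by (intro sum.cong refl) (auto simp: nbr_mean_gromov field_simps)
  also have "\<dots> = gromov_potential e B y - 1"
    using assms by (simp add: sum_subtractf gromov_potential_def)
  finally show ?thesis
    by simp
qed

lemma gromov_potential_le_gdist:
  assumes "B \<subseteq> G" "x \<in> G" "e \<in> G"
  shows "gromov_potential e B x \<le> d x e * (\<Sum>z\<in>B. gdeg G z)"
proof -
  have "gromov_potential e B x \<le> (\<Sum>z\<in>B. real (gdeg G z) * real (d x e))"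
    unfolding gromov_potential_def using assms by (intro sum_mono mult_left_mono gromov_le_left) auto
  then show ?thesis
    by (simp add: sum_distrib_left mult.commute)
qed

text \<open>\<open>d(x,e) + d(z,e) + d(x,z)\<close> is even, which excludes the value \<open>4R + 1\<close> of \<open>2 (x|z)\<^sub>e\<close>.\<close>
lemma gromov_le_of_odd_gdist:
  assumes "x \<in> G" "z \<in> G" "e \<in> G" "z \<noteq> x" "d x e = 2 * R + 1" "d z e \<le> 2 * R + 1"
  shows "gromov e x z \<le> 2 * real R"
proof -
  have "1 \<le> d x z"
    using gdist_eq_0_iff[OF assms(1,2)] assms(4) by (cases "d x z") auto
  moreover have "even (d x e + length x + length e)" "even (d z e + length z + length e)"
    "even (d x z + length x + length z)"
    using even_gdist_length assms(1-3) by blast+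
  ultimately have "d x e + d z e \<le> 4 * R + d x z"
    using assms(5,6) by presburger
  then show ?thesis
    by (simp add: gromov_def)
qed

lemma mem_gball_iff_floor: "0 \<le> r \<Longrightarrow> y \<in> gball G x r \<longleftrightarrow> y \<in> G \<and> d x y \<le> nat \<lfloor>r\<rfloor>"
  unfolding gball_def by (auto simp: le_nat_floor) linarith

lemma exists_gdist_eq:
  assumes "x \<in> G"
  shows "\<exists>e\<in>G. d x e = n"
proof -
  obtain v where v: "v \<in> G" "v \<notin> gball G x n"
    using finite_gball[OF assms, of n] infinite_vertices finite_subset subsetI by metis
  then have "n < d x v"
    by (simp add: gball_def)
  obtain p where p: "gwalk G p" "hd p = x" "last p = v" "length p = Suc (d x v)"
    using exists_geodesic[OF assms v(1)] by blast
  have "n < length p"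
    using \<open>n < d x v\<close> p by simp
  have "d x v \<le> d x (p ! n) + d (p ! n) v"
    using assms v gwalk_nth[OF p(1) \<open>n < length p\<close>] by (intro gdist_triangle)
  then have "d x (p ! n) = n"
    using gdist_hd_nth[OF p(1,2) \<open>n < length p\<close>] gdist_nth_last[OF p(1,3) \<open>n < length p\<close>] p(4)
      \<open>n < d x v\<close> by arith
  then show ?thesis
    using gwalk_nth[OF p(1) \<open>n < length p\<close>] by blast
qed

lemma two_le_gdeg:
  assumes "u \<in> G" "e \<in> G" "u \<noteq> e" "a \<in> nbrs u" "d a e = d u e + 1"
  shows "2 \<le> gdeg G u"
proof -
  obtain w where "w \<in> nbrs u" "d w e + 1 = d u e"
    using exists_nbr_closer[OF assms(1-3)] by blast
  with assms(4,5) have "card {a, w} \<le> card (nbrs u)" "a \<noteq> w"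
    by (auto intro: card_mono)
  then show ?thesis
    by (simp add: gdeg_eq_card_nbrs)
qed

lemma gdeg_eq_1_if_no_farther_nbr:
  assumes "x \<in> G" "a \<in> G" "x \<noteq> a" "\<And>w. w \<in> nbrs x \<Longrightarrow> d w a \<le> d x a"
  shows "gdeg G x = 1"
proof -
  obtain w0 where w0: "w0 \<in> nbrs x" "d w0 a + 1 = d x a"
    using exists_nbr_closer[OF assms(1-3)] by blast
  have "w = w0" if "w \<in> nbrs x" for w
    using nbr_closer_unique[OF assms(2) that w0(1)] gdist_nbr_cases[OF assms(1,2) that] assms(4)[OF that] w0
    by linarith
  with w0(1) have "nbrs x = {w0}"
    by blast
  then show ?thesis
    by (simp add: gdeg_eq_card_nbrs)
qed

context
  fixes x0 :: "nat list" and r :: real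
  assumes x0: "x0 \<in> G" and r: "1 \<le> r"
begin

lemma exists_exit_point:
  "\<exists>e u. e \<in> G \<and> d x0 e = nat \<lfloor>r\<rfloor> + 1 \<and> u \<in> gball G x0 r \<and> d u e = nat \<lfloor>r\<rfloor> \<and> 2 \<le> gdeg G u"
proof -
  define R where "R = nat \<lfloor>r\<rfloor>"
  have "1 \<le> R"
    using r by (simp add: R_def le_nat_floor)
  obtain e where e: "e \<in> G" "d x0 e = R + 1"
    using exists_gdist_eq[OF x0] by blast
  then have "x0 \<noteq> e"
    using x0 by auto
  then obtain u where u: "u \<in> nbrs x0" "d u e + 1 = d x0 e"
    using exists_nbr_closer[OF x0 e(1)] by blast
  have "u \<in> G" "x0 \<in> nbrs u"
    using u(1) x0 tadj_sym unfolding nbrs_def by auto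
  have "d u e = R"
    using u(2) e(2) by simp
  then have "u \<noteq> e"
    using \<open>1 \<le> R\<close> e(1) by auto
  have "2 \<le> gdeg G u"
    by (rule two_le_gdeg[OF \<open>u \<in> G\<close> e(1) \<open>u \<noteq> e\<close> \<open>x0 \<in> nbrs u\<close>]) (use u in simp)
  moreover have "u \<in> gball G x0 r"
    using \<open>u \<in> G\<close> gdist_nbrs[OF x0 u(1)] r by (simp add: gball_def)
  ultimately show ?thesis
    using e \<open>d u e = R\<close> unfolding R_def by blast
qed

lemma gdeg_eq_1_if_nbrs_in_gball:
  assumes "x \<in> G" "d x0 x = nat \<lfloor>r\<rfloor>" "nbrs x \<subseteq> gball G x0 r"
  shows "gdeg G x = 1"
proof (rule gdeg_eq_1_if_no_farther_nbr[OF assms(1) x0])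
  show "x \<noteq> x0"
    using assms(2) r x0 by (auto simp: le_nat_floor)
  show "d w x0 \<le> d x x0" if "w \<in> nbrs x" for w
  proof -
    have "w \<in> gball G x0 r" "w \<in> G"
      using that assms(3) nbrs_subset by auto
    then show ?thesis
      using assms(2) r gdist_sym[OF x0 \<open>w \<in> G\<close>] gdist_sym[OF x0 assms(1)]
      by (simp add: mem_gball_iff_floor)
  qed
qed

text \<open>
  With \<open>e\<close> at distance \<open>\<lfloor>r\<rfloor> + 1\<close> from \<open>x\<^sub>0\<close>, the crude bound \<open>(x|z)\<^sub>e \<le> d(x, e)\<close> fails only
  when \<open>x\<close> is opposite to \<open>e\<close>; then \<open>x\<close> is a leaf, and a vertex \<open>u\<close> of degree \<open>\<ge> 2\<close> next to
  \<open>x\<^sub>0\<close> pays for the excess.\<close>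
lemma gromov_potential_le_opposite:
  assumes x: "x \<in> gball G x0 r" and nbrs_x: "nbrs x \<subseteq> gball G x0 r"
    and e: "e \<in> G" "d x0 e = nat \<lfloor>r\<rfloor> + 1" "d x e = 2 * nat \<lfloor>r\<rfloor> + 1"
    and u: "u \<in> gball G x0 r" "d u e = nat \<lfloor>r\<rfloor>" "2 \<le> gdeg G u"
  shows "gromov_potential e (gball G x0 r) x \<le> 2 * r * gvol G x0 r"
proof -
  define R where "R = nat \<lfloor>r\<rfloor>"
  define B where "B = gball G x0 r"
  have "1 \<le> R" "real R \<le> r"
    using r by (simp_all add: R_def le_nat_floor)
  have eR: "d x0 e = R + 1" "d x e = 2 * R + 1" "d u e = R"
    using e u by (simp_all add: R_def)
  have inB: "y \<in> B \<longleftrightarrow> y \<in> G \<and> d x0 y \<le> R" for y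
    using r by (simp add: B_def R_def mem_gball_iff_floor)
  have xG: "x \<in> G" and "d x0 x \<le> R" and "u \<in> G"
    using x u inB by (auto simp: B_def)
  have "d x e \<le> d x x0 + d x0 e"
    using xG x0 e by (intro gdist_triangle)
  then have "d x0 x = R"
    using \<open>d x0 x \<le> R\<close> gdist_sym[OF xG x0] eR by simp
  have "gdeg G x = 1"
    using gdeg_eq_1_if_nbrs_in_gball[OF xG _ nbrs_x] \<open>d x0 x = R\<close> by (simp add: R_def)
  have "u \<noteq> x"
    using eR \<open>1 \<le> R\<close> by auto
  define b where "b z = 2 * real R + (if z = x then 1 else 0) - (if z = u then real R else 0)" for z
  have "gromov e x z \<le> b z" if "z \<in> B" for z
  proof -
    have zG: "z \<in> G"
      using that inB by auto
    consider "z = x" | "z = u" | "z \<noteq> x" "z \<noteq> u"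
      by blast
    then show ?thesis
    proof cases
      case 1
      then show ?thesis
        using gromov_le_left[OF xG zG e(1)] eR \<open>u \<noteq> x\<close> by (simp add: b_def)
    next
      case 2
      then show ?thesis
        using gromov_le_right[OF xG zG e(1)] eR \<open>u \<noteq> x\<close> by (simp add: b_def)
    next
      case 3
      have "d z e \<le> 2 * R + 1"
        using gdist_triangle[OF zG x0 e(1)] gdist_sym[OF zG x0] inB that eR by simp
      with 3 show ?thesis
        using gromov_le_of_odd_gdist[OF xG zG e(1) _ eR(2)] by (simp add: b_def)
    qed
  qed
  then have "gromov_potential e B x \<le> (\<Sum>z\<in>B. gdeg G z * b z)"
    unfolding gromov_potential_def by (intro sum_mono mult_left_mono) auto
  also have "\<dots> = 2 * R * gvol G x0 r + gdeg G x - R * gdeg G u"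
    using x u finite_gball[OF x0]
    by (simp add: b_def B_def gvol_def algebra_simps sum.distrib sum_subtractf sum_distrib_left
        if_distrib[of "(*) _"] sum.delta' cong: if_cong)
  also have "\<dots> \<le> 2 * r * gvol G x0 r"
  proof -
    have "1 * 2 \<le> real R * gdeg G u"
      using \<open>1 \<le> R\<close> u by (intro mult_mono) auto
    moreover have "0 \<le> gvol G x0 r"
      by (simp add: gvol_def sum_nonneg)
    ultimately show ?thesis
      using \<open>gdeg G x = 1\<close> \<open>real R \<le> r\<close> mult_right_mono[of "real R" r "gvol G x0 r"] by simp
  qed
  finally show ?thesis
    unfolding B_def .
qed

lemma exists_gromov_potential_le:
  assumes x: "x \<in> gball G x0 r"
  shows "\<exists>e\<in>G. e \<notin> gball G x0 r \<and> gromov_potential e (gball G x0 r) x \<le> 2 * r * gvol G x0 r"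
proof -
  define R where "R = nat \<lfloor>r\<rfloor>"
  define B where "B = gball G x0 r"
  have inB: "y \<in> B \<longleftrightarrow> y \<in> G \<and> d x0 y \<le> R" for y
    using r by (simp add: B_def R_def mem_gball_iff_floor)
  have xG: "x \<in> G" and "d x0 x \<le> R"
    using x inB by (auto simp: B_def)
  have near: "gromov_potential e B x \<le> 2 * r * gvol G x0 r" if "e \<in> G" "d x e \<le> 2 * R" for e
  proof -
    have "gromov_potential e B x \<le> d x e * gvol G x0 r"
      using gromov_potential_le_gdist[OF _ xG \<open>e \<in> G\<close>, of B] by (auto simp: B_def gball_def gvol_def)
    also have "\<dots> \<le> 2 * r * gvol G x0 r"
    proof (rule mult_right_mono)
      have "real (d x e) \<le> real (2 * R)"
        using that(2) by (rule of_nat_mono)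
      moreover have "real R \<le> r"
        using r by (simp add: R_def)
      ultimately show "real (d x e) \<le> 2 * r"
        by simp
    qed (simp add: gvol_def sum_nonneg)
    finally show ?thesis .
  qed
  show ?thesis
  proof (cases "nbrs x \<subseteq> B")
    case False
    then obtain w where w: "w \<in> nbrs x" "w \<notin> B"
      by blast
    then have "w \<in> G" "d x w = 1"
      using xG nbrs_subset gdist_nbrs by auto
    moreover have "1 \<le> R"
      using r by (simp add: R_def le_nat_floor)
    ultimately show ?thesis
      using near[of w] w by (auto simp: B_def)
  next
    case True
    obtain e u where e: "e \<in> G" "d x0 e = R + 1" and u: "u \<in> gball G x0 r" "d u e = R" "2 \<le> gdeg G u"
      using exists_exit_point unfolding R_def by blast
    have "e \<notin> B"
      using inB e by simp
    have "d x e \<le> 2 * R + 1"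
      using gdist_triangle[OF xG x0 e(1)] gdist_sym[OF xG x0] \<open>d x0 x \<le> R\<close> e by simp
    then consider "d x e \<le> 2 * R" | "d x e = 2 * R + 1"
      by linarith
    then have "gromov_potential e B x \<le> 2 * r * gvol G x0 r"
    proof cases
      case 2
      show ?thesis
        unfolding B_def
        by (rule gromov_potential_le_opposite[OF x _ e(1) _ _ u(1) _ u(3)])
          (use True e u 2 in \<open>simp_all add: B_def R_def\<close>)
    qed (rule near[OF e(1)])
    with e \<open>e \<notin> B\<close> show ?thesis
      by (auto simp: B_def)
  qed
qed

theorem exp_exit_gball_le:
  assumes "z \<in> gball G x0 r"
  shows "exp_exit n0 G (gball G x0 r) z \<le> ennreal (2 * r * gvol G x0 r)"
proof -
  let ?B = "gball G x0 r"
  have B: "?B \<subseteq> G" "finite ?B"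
    using finite_gball[OF x0] by (auto simp: gball_def)
  obtain e where e: "e \<in> G" "e \<notin> ?B" "gromov_potential e ?B z \<le> 2 * r * gvol G x0 r"
    using exists_gromov_potential_le[OF assms] by blast
  have "exp_exit n0 G ?B z \<le> ennreal (gromov_potential e ?B z)"
    using B e assms nbr_list_nonempty
    by (intro exp_exit_le_supersolution gromov_potential_nonneg gromov_potential_supersolution) auto
  also have "\<dots> \<le> ennreal (2 * r * gvol G x0 r)"
    using e(3) by (rule ennreal_leI)
  finally show ?thesis .
qed

end

end

section \<open>Lower bound for the mean exit time\<close>

locale ball_separator = infinite_subtree +
  fixes x0 :: "nat list" and r :: real and A :: "nat list set" and m :: nat
  assumes x0: "x0 \<in> G" and r: "1 \<le> r"
    and finite_A: "finite A" and A_subset: "A \<subseteq> G" and card_A: "card A = m" and m_pos: "0 < m"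
    and A_far: "\<And>a. a \<in> A \<Longrightarrow> r / 4 \<le> real (d x0 a)"
    and A_separates: "\<And>p. gwalk G p \<Longrightarrow> hd p = x0 \<Longrightarrow> last p \<notin> gball G x0 r \<Longrightarrow> set p \<inter> A \<noteq> {}"
begin

abbreviation rho :: real where
  "rho \<equiv> r / (32 * real m)"

lemma A_nonempty: "A \<noteq> {}"
  using card_A m_pos by auto

lemma rho_nonneg: "0 \<le> rho"
  using r by simp

lemma rho_mult_le: "rho + 3 * (real m * rho) \<le> r / 4"
proof -
  have "rho + 3 * (real m * rho) \<le> 4 * (real m * rho)"
    using rho_nonneg m_pos mult_right_mono[of 1 "real m" rho] by simp
  also have "\<dots> = r / 8"
    using m_pos by simp
  finally show ?thesis
    using r by simp
qed

lemma rho_less: "rho < r / 4"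
proof -
  have "rho \<le> r / 32"
    using r m_pos by (intro divide_left_mono) auto
  then show ?thesis
    using r by simp
qed

lemma Min_gdist_A_le: "a \<in> A \<Longrightarrow> Min ((\<lambda>a. d z a) ` A) \<le> d z a"
  using finite_A by (intro Min_le) auto

definition sep_offset :: "nat list \<Rightarrow> real" where
  "sep_offset z = (\<Sum>a\<in>A. real (d z a)) - real (Min ((\<lambda>a. d z a) ` A))"

text \<open>
  \<open>sep_green z\<close> averages the Gromov products based at the points of \<open>A\<close>; the sources at \<open>A\<close>
  make it subharmonic away from \<open>z\<close>, and the offset makes it nonpositive beyond \<open>A\<close>.\<close>
definition sep_green :: "nat list \<Rightarrow> nat list \<Rightarrow> real" where
  "sep_green z y = (\<Sum>a\<in>A. gromov a y z) / m - sep_offset z / m"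

definition sep_potential :: "nat list \<Rightarrow> real" where
  "sep_potential y = (\<Sum>z\<in>gball G x0 rho. gdeg G z * sep_green z y)"

lemma sep_offset_nonneg: "0 \<le> sep_offset z"
proof -
  obtain a where a: "a \<in> A"
    using A_nonempty by blast
  have "real (Min ((\<lambda>a. d z a) ` A)) \<le> real (d z a)"
    using Min_gdist_A_le[OF a, of z] by simp
  also have "\<dots> \<le> (\<Sum>a\<in>A. real (d z a))"
    using a finite_A by (intro member_le_sum) auto
  finally show ?thesis
    unfolding sep_offset_def by simp
qed

lemma sep_green_subharmonic:
  assumes "y \<in> G" "z \<in> G"
  shows "sep_green z y - (if y = z then 1 else 0) / gdeg G y \<le> nbr_mean n0 G (sep_green z) y"
proof -
  have "sep_green z = (\<lambda>w. (1 / m) * (\<Sum>a\<in>A. gromov a w z) + - (sep_offset z / m))"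
    by (rule ext) (simp add: sep_green_def)
  then have "nbr_mean n0 G (sep_green z) y =
      (\<Sum>a\<in>A. nbr_mean n0 G (\<lambda>w. gromov a w z) y) / m - sep_offset z / m"
    by (simp only: nbr_mean_add nbr_mean_cmult nbr_mean_sum nbr_mean_const[OF nbr_list_nonempty[OF assms(1)]])
      simp
  also have "\<dots> = (\<Sum>a\<in>A. gromov a y z + ((if y = a then 1 else 0) - (if y = z then 1 else 0)) / gdeg G y) / m
      - sep_offset z / m"
    using assms A_subset by (simp add: nbr_mean_gromov subset_iff)
  also have "\<dots> = sep_green z y + (\<Sum>a\<in>A. (if y = a then 1 else 0) / gdeg G y) / m
      - (if y = z then 1 else 0) / gdeg G y"
    using card_A m_pos
    by (simp add: sep_green_def sum.distrib sum_subtractf diff_divide_distrib add_divide_distrib)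
  finally show ?thesis
    by (simp add: sum_nonneg)
qed

lemma sep_potential_subsolution:
  assumes "y \<in> G"
  shows "sep_potential y \<le> 1 + nbr_mean n0 G sep_potential y"
proof -
  have "sep_potential y - (\<Sum>z\<in>gball G x0 rho. if y = z then 1 else 0) =
      (\<Sum>z\<in>gball G x0 rho. gdeg G z * (sep_green z y - (if y = z then 1 else 0) / gdeg G y))"
    using gdeg_pos[OF assms] unfolding sep_potential_def
    by (simp add: right_diff_distrib sum_subtractf) (intro sum.cong refl, auto)
  also have "\<dots> \<le> (\<Sum>z\<in>gball G x0 rho. gdeg G z * nbr_mean n0 G (sep_green z) y)"
    using assms by (intro sum_mono mult_left_mono sep_green_subharmonic) (auto simp: gball_def)
  also have "\<dots> = nbr_mean n0 G sep_potential y"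
    unfolding sep_potential_def by (simp add: nbr_mean_sum nbr_mean_cmult)
  finally show ?thesis
    using finite_gball[OF x0, of rho] by (simp add: sum.delta split: if_splits)
qed

text \<open>\<open>A\<close> meets the geodesics \<open>x\<^sub>0 \<rightarrow> z \<rightarrow> y\<close>, and not the first one since \<open>A\<close> is far from \<open>x\<^sub>0\<close>.\<close>
lemma separator_on_geodesic:
  assumes z: "z \<in> gball G x0 rho" and y: "y \<in> G" "y \<notin> gball G x0 r"
  shows "\<exists>a\<in>A. d z a + d a y \<le> d z y"
proof -
  have zG: "z \<in> G"
    using z by (simp add: gball_def)
  obtain q1 where q1: "gwalk G q1" "hd q1 = x0" "last q1 = z" "length q1 = Suc (d x0 z)"
    using exists_geodesic[OF x0 zG] by blast
  obtain q2 where q2: "gwalk G q2" "hd q2 = z" "last q2 = y" "length q2 = Suc (d z y)"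
    using exists_geodesic[OF zG y(1)] by blast
  have "gwalk G (q1 @ tl q2)"
    using q1 q2 by (intro gwalk_join) auto
  moreover have "hd (q1 @ tl q2) = x0"
    using q1 by (cases q1) (auto simp: gwalk_def)
  moreover have "last (q1 @ tl q2) = y"
    using q1 q2 by (cases q2) (auto simp: gwalk_def)
  ultimately obtain a where a: "a \<in> A" "a \<in> set (q1 @ tl q2)"
    using A_separates y(2) by blast
  show ?thesis
  proof (cases "a \<in> set q1")
    case True
    then obtain k where k: "k < length q1" "q1 ! k = a"
      by (auto simp: in_set_conv_nth)
    have "d x0 a \<le> d x0 z"
      using gdist_hd_nth[OF q1(1,2) k(1)] k q1(4) by simp
    then have "real (d x0 a) < r / 4"
      using z rho_less by (simp add: gball_def)
    with A_far[OF a(1)] show ?thesis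
      by simp
  next
    case False
    with a(2) have "a \<in> set q2"
      by (cases q2) auto
    then obtain k where k: "k < length q2" "q2 ! k = a"
      by (auto simp: in_set_conv_nth)
    then have "d z a \<le> k" "d a y \<le> length q2 - 1 - k"
      using gdist_hd_nth[OF q2(1,2) k(1)] gdist_nth_last[OF q2(1,3) k(1)] by simp_all
    with a(1) q2(4) k(1) show ?thesis
      by (intro bexI[of _ a]) auto
  qed
qed

lemma sep_green_nonpos_outside:
  assumes z: "z \<in> gball G x0 rho" and y: "y \<in> G" "y \<notin> gball G x0 r"
  shows "sep_green z y \<le> 0"
proof -
  have zG: "z \<in> G"
    using z by (simp add: gball_def)
  obtain a0 where a0: "a0 \<in> A" "d z a0 + d a0 y \<le> d z y"
    using separator_on_geodesic[OF assms] by blast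
  have "a0 \<in> G"
    using a0 A_subset by auto
  have "gromov a0 y z \<le> 0"
    unfolding gromov_def using a0 gdist_sym[OF y(1) \<open>a0 \<in> G\<close>] gdist_sym[OF y(1) zG] by simp
  have "(\<Sum>a\<in>A. gromov a y z) = gromov a0 y z + (\<Sum>a\<in>A - {a0}. gromov a y z)"
    using a0 finite_A by (simp add: sum.remove)
  also have "\<dots> \<le> 0 + (\<Sum>a\<in>A - {a0}. real (d z a))"
    using \<open>gromov a0 y z \<le> 0\<close> A_subset by (intro add_mono sum_mono gromov_le_right[OF y(1) zG]) auto
  also have "\<dots> = (\<Sum>a\<in>A. real (d z a)) - real (d z a0)"
    using a0 finite_A by (simp add: sum_diff1)
  also have "\<dots> \<le> sep_offset z"
    unfolding sep_offset_def using Min_gdist_A_le[OF a0(1), of z] by simp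
  finally show ?thesis
    unfolding sep_green_def by (simp add: diff_divide_distrib[symmetric] divide_nonpos_pos m_pos)
qed

lemma sep_potential_nonpos_outside: "y \<in> G \<Longrightarrow> y \<notin> gball G x0 r \<Longrightarrow> sep_potential y \<le> 0"
  unfolding sep_potential_def by (intro sum_nonpos mult_nonneg_nonpos sep_green_nonpos_outside) auto

lemma sep_potential_le:
  assumes "y \<in> G"
  shows "sep_potential y \<le> (\<Sum>z\<in>gball G x0 rho. gdeg G z * ((\<Sum>a\<in>A. real (d z a)) / m))"
  unfolding sep_potential_def
proof (intro sum_mono mult_left_mono)
  fix z
  assume "z \<in> gball G x0 rho"
  then have "(\<Sum>a\<in>A. gromov a y z) \<le> (\<Sum>a\<in>A. real (d z a))"
    using assms A_subset by (intro sum_mono gromov_le_right) (auto simp: gball_def)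
  then have "(\<Sum>a\<in>A. gromov a y z) / m \<le> (\<Sum>a\<in>A. real (d z a)) / m"
    by (rule divide_right_mono) simp
  moreover have "0 \<le> sep_offset z / m"
    using sep_offset_nonneg[of z] by simp
  ultimately show "sep_green z y \<le> (\<Sum>a\<in>A. real (d z a)) / m"
    unfolding sep_green_def by linarith
qed simp

lemma sep_green_ge:
  assumes z: "z \<in> gball G x0 rho" and x: "x \<in> gball G x0 rho"
  shows "rho \<le> sep_green z x"
proof -
  have zG: "z \<in> G" and xG: "x \<in> G" and "real (d x0 z) \<le> rho" "real (d x0 x) \<le> rho"
    using z x by (auto simp: gball_def)
  then have dxz: "real (d x z) \<le> 2 * rho"
    using gdist_triangle[OF xG x0 zG] gdist_sym[OF xG x0] by simp
  have "Min ((\<lambda>a. d z a) ` A) \<in> (\<lambda>a. d z a) ` A"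
    using finite_A A_nonempty by (intro Min_in) auto
  then obtain a1 where a1: "a1 \<in> A" "Min ((\<lambda>a. d z a) ` A) = d z a1"
    by auto
  have "d x0 a1 \<le> d x0 z + d z a1"
    using a1 A_subset x0 zG by (intro gdist_triangle) auto
  then have min_far: "r / 4 - rho \<le> real (Min ((\<lambda>a. d z a) ` A))"
    using A_far[OF a1(1)] \<open>real (d x0 z) \<le> rho\<close> a1(2) by simp
  have "(\<Sum>a\<in>A. real (d z a)) - m * real (d x z) \<le> (\<Sum>a\<in>A. gromov a x z)"
    using sum_mono[of A "\<lambda>a. real (d z a) - real (d x z)" "\<lambda>a. gromov a x z"]
      gromov_ge[OF xG zG] A_subset card_A
    by (auto simp: sum_subtractf)
  then have "real (Min ((\<lambda>a. d z a) ` A)) - m * real (d x z) \<le> (\<Sum>a\<in>A. gromov a x z) - sep_offset z"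
    unfolding sep_offset_def by simp
  moreover have "real m * real (d x z) \<le> real m * (2 * rho)"
    using dxz by (intro mult_left_mono) auto
  then have "real m * real (d x z) \<le> 2 * (real m * rho)"
    by (metis mult.left_commute)
  ultimately have "real m * rho \<le> (\<Sum>a\<in>A. gromov a x z) - sep_offset z"
    using min_far rho_mult_le by linarith
  then show ?thesis
    using m_pos unfolding sep_green_def by (simp add: field_simps)
qed

lemma sep_potential_ge:
  assumes "x \<in> gball G x0 rho"
  shows "r * gvol G x0 rho / (32 * real m) \<le> sep_potential x"
proof -
  have "r * gvol G x0 rho / (32 * real m) = gvol G x0 rho * rho"
    by simp
  also have "\<dots> = (\<Sum>z\<in>gball G x0 rho. gdeg G z * rho)"
    unfolding gvol_def by (rule sum_distrib_right)
  also have "\<dots> \<le> sep_potential x"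
    unfolding sep_potential_def using assms by (intro sum_mono mult_left_mono sep_green_ge) auto
  finally show ?thesis .
qed

theorem exp_exit_gball_ge:
  assumes "x \<in> gball G x0 rho"
  shows "ennreal (r * gvol G x0 rho / (32 * real m)) \<le> exp_exit n0 G (gball G x0 r) x"
proof -
  have "ennreal (r * gvol G x0 rho / (32 * real m)) \<le> ennreal (sep_potential x)"
    using sep_potential_ge[OF assms] by (rule ennreal_leI)
  also have "\<dots> \<le> exp_exit n0 G (gball G x0 r) x"
    using assms nbr_list_nonempty sep_potential_nonpos_outside sep_potential_subsolution sep_potential_le
    by (intro subsolution_le_exp_exit) (auto simp: gball_def)
  finally show ?thesis .
qed

end

lemma Msep_attained:
  assumes "Msep G x r = enat m"
  shows "\<exists>A. finite A \<and> A \<subseteq> G \<and> card A = m \<and>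
    (\<forall>z\<in>A. r / 4 \<le> real (gdist G x z) \<and> real (gdist G x z) \<le> 3 * r / 4) \<and>
    (\<forall>p. gwalk G p \<and> hd p = x \<and> last p \<notin> gball G x r \<longrightarrow> set p \<inter> A \<noteq> {})"
proof -
  let ?S = "{enat (card A) | A. finite A \<and> A \<subseteq> G \<and>
      (\<forall>z\<in>A. r / 4 \<le> real (gdist G x z) \<and> real (gdist G x z) \<le> 3 * r / 4) \<and>
      (\<forall>p. gwalk G p \<and> hd p = x \<and> last p \<notin> gball G x r \<longrightarrow> set p \<inter> A \<noteq> {})}"
  have "?S \<noteq> {}"
  proof
    assume empty: "?S = {}"
    have "Msep G x r = \<infinity>"
      unfolding Msep_def empty by (simp add: top_enat_def)
    with assms show False
      by simp
  qed
  then obtain k where "k \<in> ?S"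
    by blast
  then have "Msep G x r \<in> ?S"
    unfolding Msep_def by (rule wellorder_InfI)
  then obtain A where A: "Msep G x r = enat (card A)" "finite A" "A \<subseteq> G"
    "\<forall>z\<in>A. r / 4 \<le> real (gdist G x z) \<and> real (gdist G x z) \<le> 3 * r / 4"
    "\<forall>p. gwalk G p \<and> hd p = x \<and> last p \<notin> gball G x r \<longrightarrow> set p \<inter> A \<noteq> {}"
    by blast
  moreover from A(1) assms have "card A = m"
    by simp
  ultimately show ?thesis
    by blast
qed

theorem lemma4p5:
  fixes n0 :: nat and G :: "nat list set" and x0 :: "nat list" and r :: real
  assumes "n0 \<ge> 2"
    and "\<forall>v\<in>G. tree_vertex n0 v"
    and "infinite G"
    and "connected_sub G"
    and "x0 \<in> G"
    and "r \<ge> 1"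
  shows "(\<forall>z\<in>gball G x0 r. exp_exit n0 G (gball G x0 r) z \<le> ennreal (2 * r * gvol G x0 r))
       \<and> (\<forall>m::nat. Msep G x0 r = enat m \<longrightarrow>
           (\<forall>x\<in>gball G x0 (r / (32 * real m)).
              ennreal (r * gvol G x0 (r / (32 * real m)) / (32 * real m))
                \<le> exp_exit n0 G (gball G x0 r) x))"
proof -
  interpret infinite_subtree G n0
    using assms(2-4) by unfold_locales
  have lower: "ennreal (r * gvol G x0 (r / (32 * real m)) / (32 * real m)) \<le> exp_exit n0 G (gball G x0 r) x"
    if M: "Msep G x0 r = enat m" and x: "x \<in> gball G x0 (r / (32 * real m))" for m x
  proof (cases "m = 0")
    case False
    obtain A where A: "finite A" "A \<subseteq> G" "card A = m"
      "\<forall>a\<in>A. r / 4 \<le> real (d x0 a) \<and> real (d x0 a) \<le> 3 * r / 4"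
      "\<forall>p. gwalk G p \<and> hd p = x0 \<and> last p \<notin> gball G x0 r \<longrightarrow> set p \<inter> A \<noteq> {}"
      using Msep_attained[OF M] by blast
    interpret ball_separator G n0 x0 r A m
      using A assms(5,6) False by unfold_locales (blast | simp)+
    show ?thesis
      using exp_exit_gball_ge[OF x] .
  qed simp \<comment> \<open>for \<open>m = 0\<close> the bound is \<open>0\<close>, since \<open>r / 0 = 0\<close>\<close>
  show ?thesis
    using exp_exit_gball_le[OF assms(5,6)] lower by blast
qed

end
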